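(* Let $G$ be a finitely generated group of exponential growth with finite generating set $S_G$ and let $H\ne\{1\}$ be a finite group; equip $H\wr G$ with the word metric with respect to $(H\setminus\{1\})\cup S_G$. If $\mathrm{dim}_{AN}(G)\le n$, then for any $k\ge n$ the $k$-dimensional control function of $H\wr G$ is weakly equivalent to $t\mapsto 2^t$; that is, there is a $k$-dimensional control function of $H\wr G$ weakly dominated by $2^t$, and every $k$-dimensional control function of $H\wr G$ weakly dominates $2^t$.
   Context: Wreath product: $H\wr G$ is the set of pairs $(f,g)$, $f:G\to H$ finitely supported, with $(f_1,g_1)(f_2,g_2)=(f_1\cdot(g_1f_2),g_1g_2)$ where $(gf)(\gamma)=f(g^{-1}\gamma)$. Growth function $\gamma(r)=\#\{g:|g|_{S_G}<r\}$; exponential growth means $\gamma$ is weakly equivalent to $2^t$ (equivalently $\lim_r\gamma(r)^{1/r}>1$). For a metric space $X$, $r>0$: $r$-components of $Y\subseteq X$ are classes of points joined by sequences in $Y$ with consecutive distances $<r$. An $m$-dimensional control function of $X$ is $D:\mathbb{R}_+\to\mathbb{R}_+\cup\{\infty\}$ such that for each $r>0$ there is a cover $\{X_0,\dots,X_m\}$ of $X$ such that every open ball $B(x,r)$ lies in some $X_i$ and every $r$-component of each $X_i$ has diameter at most $D(r)$. $\mathrm{dim}_{AN}(X)$ is the smallest $m$ such that $X$ has an $m$-dimensional control function $D(r)=Cr$ with $C>0$. $f$ weakly dominates $g$ if there are $\lambda\ge1$, $C\ge0$ with $g(t)\le\lambda f(\lambda t+C)+C$ for all $t\ge0$; weakly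 equivalent means each weakly dominates the other. *)

theory Defs
  imports "HOL-Algebra.Group" "HOL-Algebra.Generated_Groups"
          "HOL-Library.Extended_Real" "HOL-Library.Extended_Nat"
begin

definition word_length :: "('g,'b) monoid_scheme \<Rightarrow> 'g set \<Rightarrow> 'g \<Rightarrow> nat" where
  "word_length G S g = (LEAST n. \<exists>xs. length xs = n \<and> set xs \<subseteq> S \<union> m_inv G ` S
      \<and> foldr (\<lambda>a b. a \<otimes>\<^bsub>G\<^esub> b) xs \<one>\<^bsub>G\<^esub> = g)"

definition word_dist :: "('g,'b) monoid_scheme \<Rightarrow> 'g set \<Rightarrow> 'g \<Rightarrow> 'g \<Rightarrow> real" where
  "word_dist G S x y = real (word_length G S (inv\<^bsub>G\<^esub> x \<otimes>\<^bsub>G\<^esub> y))"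

definition growth :: "('g,'b) monoid_scheme \<Rightarrow> 'g set \<Rightarrow> real \<Rightarrow> ereal" where
  "growth G S r = ereal (real (card {g \<in> carrier G. real (word_length G S g) < r}))"

definition weakly_dominates :: "(real \<Rightarrow> ereal) \<Rightarrow> (real \<Rightarrow> ereal) \<Rightarrow> bool" where
  "weakly_dominates f g \<longleftrightarrow> (\<exists>lam C. lam \<ge> 1 \<and> C \<ge> 0 \<and>
      (\<forall>t\<ge>0. g t \<le> ereal lam * f (lam * t + C) + ereal C))"

definition weakly_equivalent :: "(real \<Rightarrow> ereal) \<Rightarrow> (real \<Rightarrow> ereal) \<Rightarrow> bool" where
  "weakly_equivalent f g \<longleftrightarrow> weakly_dominates f g \<and> weakly_dominates g f"

definition exp_growth :: "('g,'b) monoid_scheme \<Rightarrow> 'g set \<Rightarrow> bool" where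
  "exp_growth G S \<longleftrightarrow> weakly_equivalent (growth G S) (\<lambda>t. ereal (2 powr t))"

definition r_step :: "'a set \<Rightarrow> ('a \<Rightarrow> 'a \<Rightarrow> real) \<Rightarrow> real \<Rightarrow> 'a \<Rightarrow> 'a \<Rightarrow> bool" where
  "r_step Y d r a b \<longleftrightarrow> a \<in> Y \<and> b \<in> Y \<and> d a b < r"

definition r_component :: "'a set \<Rightarrow> ('a \<Rightarrow> 'a \<Rightarrow> real) \<Rightarrow> real \<Rightarrow> 'a \<Rightarrow> 'a set" where
  "r_component Y d r x = {y. (r_step Y d r)\<^sup>*\<^sup>* x y}"

definition diam_e :: "('a \<Rightarrow> 'a \<Rightarrow> real) \<Rightarrow> 'a set \<Rightarrow> ereal" where
  "diam_e d C = Sup {ereal (d x y) | x y. x \<in> C \<and> y \<in> C}"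

definition control_function ::
    "'a set \<Rightarrow> ('a \<Rightarrow> 'a \<Rightarrow> real) \<Rightarrow> nat \<Rightarrow> (real \<Rightarrow> ereal) \<Rightarrow> bool" where
  "control_function X d m D \<longleftrightarrow> (\<forall>t\<ge>0. D t \<ge> 0) \<and>
     (\<forall>r>0. \<exists>U :: nat \<Rightarrow> 'a set.
        (\<forall>i\<le>m. U i \<subseteq> X) \<and> (\<Union>i\<le>m. U i) = X \<and>
        (\<forall>x\<in>X. \<exists>i\<le>m. {y \<in> X. d x y < r} \<subseteq> U i) \<and>
        (\<forall>i\<le>m. \<forall>x\<in>U i. diam_e d (r_component (U i) d r x) \<le> D r))"

definition has_linear_control :: "'a set \<Rightarrow> ('a \<Rightarrow> 'a \<Rightarrow> real) \<Rightarrow> nat \<Rightarrow> bool" where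
  "has_linear_control X d m \<longleftrightarrow> (\<exists>C>0. control_function X d m (\<lambda>r. ereal (C * r)))"

definition dim_AN :: "'a set \<Rightarrow> ('a \<Rightarrow> 'a \<Rightarrow> real) \<Rightarrow> enat" where
  "dim_AN X d = (if \<exists>m. has_linear_control X d m
                 then enat (LEAST m. has_linear_control X d m) else \<infinity>)"

definition wreath :: "('h,'a) monoid_scheme \<Rightarrow> ('g,'b) monoid_scheme \<Rightarrow> (('g \<Rightarrow> 'h) \<times> 'g) monoid" where
  "wreath H G = \<lparr>carrier = {(f, g). f \<in> extensional (carrier G) \<and> f ` carrier G \<subseteq> carrier H
        \<and> finite {x \<in> carrier G. f x \<noteq> \<one>\<^bsub>H\<^esub>} \<and> g \<in> carrier G},
     mult = (\<lambda>(f1, g1) (f2, g2). ((\<lambda>x\<in>carrier G. f1 x \<otimes>\<^bsub>H\<^esub> f2 (inv\<^bsub>G\<^esub> g1 \<otimes>\<^bsub>G\<^esub> x)),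
                                  g1 \<otimes>\<^bsub>G\<^esub> g2)),
     one = ((\<lambda>x\<in>carrier G. \<one>\<^bsub>H\<^esub>), \<one>\<^bsub>G\<^esub>)\<rparr>"

definition wreath_gens :: "('h,'a) monoid_scheme \<Rightarrow> ('g,'b) monoid_scheme \<Rightarrow> 'g set \<Rightarrow> (('g \<Rightarrow> 'h) \<times> 'g) set" where
  "wreath_gens H G S =
     {((\<lambda>x\<in>carrier G. if x = \<one>\<^bsub>G\<^esub> then h else \<one>\<^bsub>H\<^esub>), \<one>\<^bsub>G\<^esub>) | h. h \<in> carrier H - {\<one>\<^bsub>H\<^esub>}}
     \<union> {((\<lambda>x\<in>carrier G. \<one>\<^bsub>H\<^esub>), s) | s. s \<in> S}"

end

theory Submission
  imports Defs "HOL-Analysis.Brouwer_Fixpoint"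
begin

text \<open>Write an element of the wreath product as a lamp configuration together with the position of
  the lamplighter. Its word length is at least the number of lit lamps and at least the distance
  from \<open>\<one>\<close> to every lit lamp and to the position; conversely, switching the lamps one at a time
  shows that it is at most (number of lit lamps) \<open>\<cdot>\<close> (2 \<open>\<cdot>\<close> their maximal distance \<open>+ 1\<close>) plus
  the length of the position.

  Upper bound: pull back a cover of \<open>G\<close> with linear control \<open>c r\<close> along the position map. An
  \<open>r\<close>-chain in a pulled-back set keeps the lamplighter in one \<open>r\<close>-component of \<open>G\<close> and only changes
  lamps within distance \<open>r\<close> of it, hence inside a ball of radius \<open>(c + 1) r\<close>, whose volume is
  exponential in \<open>r\<close>.

  Lower bound: choose \<open>(k + 1) p\<close> lamps in the ball of radius \<open>R\<close>, where \<open>p\<close> is about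
  \<open>\<gamma>(R) / (k + 1)\<close>, and light them according to the points of the cube \<open>{0..p}\<close> to the power
  \<open>k + 1\<close>. Neighbouring points give configurations at distance less than \<open>r \<approx> 2 (k + 1) R\<close>, so by
  a discrete Lebesgue covering theorem one of the \<open>k + 1\<close> sets of any cover at scale \<open>r\<close> contains an
  \<open>r\<close>-chain between two configurations that differ in \<open>p\<close> lamps. Hence \<open>D(r) \<ge> p\<close>, which is
  exponential in \<open>r\<close> since \<open>G\<close> has exponential growth.\<close>

lemma r_component_self: "x \<in> r_component Y d r x"
  by (simp add: r_component_def)

lemma r_component_subset: "x \<in> Y \<Longrightarrow> r_component Y d r x \<subseteq> Y"
proof
  fix y assume "x \<in> Y" "y \<in> r_component Y d r x"
  then have "(r_step Y d r)\<^sup>*\<^sup>* x y" by (simp add: r_component_def)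
  then show "y \<in> Y" using \<open>x \<in> Y\<close> by (induction rule: rtranclp_induct) (auto simp: r_step_def)
qed

lemma r_component_of_rtranclp:
  assumes "R\<^sup>*\<^sup>* x y" and "\<And>a b. R a b \<Longrightarrow> r_step Y d r (f a) (f b)"
  shows "f y \<in> r_component Y d r (f x)"
  using assms(1) unfolding r_component_def
  by (induction rule: rtranclp_induct) (auto intro: rtranclp.rtrancl_into_rtrancl assms(2))

lemma diam_e_ge: "x \<in> C \<Longrightarrow> y \<in> C \<Longrightarrow> ereal (d x y) \<le> diam_e d C"
  unfolding diam_e_def by (intro Sup_upper) blast

lemma diam_e_le: "(\<And>x y. x \<in> C \<Longrightarrow> y \<in> C \<Longrightarrow> ereal (d x y) \<le> B) \<Longrightarrow> diam_e d C \<le> B"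
  unfolding diam_e_def by (intro Sup_least) blast

lemma control_function_mono:
  assumes D: "control_function X d m D" and "m \<le> k" and DD': "\<And>t. t \<ge> 0 \<Longrightarrow> D t \<le> D' t"
  shows "control_function X d k D'"
  unfolding control_function_def
proof (intro conjI allI impI)
  show "0 \<le> D' t" if "t \<ge> 0" for t
    using D DD'[OF that] that unfolding control_function_def by (meson order_trans)
  fix r :: real assume r: "r > 0"
  obtain U where U: "\<forall>i\<le>m. U i \<subseteq> X" "(\<Union>i\<le>m. U i) = X"
    "\<forall>x\<in>X. \<exists>i\<le>m. {y \<in> X. d x y < r} \<subseteq> U i"
    "\<forall>i\<le>m. \<forall>x\<in>U i. diam_e d (r_component (U i) d r x) \<le> D r"
    using D[unfolded control_function_def, THEN conjunct2, rule_format, OF r] by (elim exE conjE) blast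
  define U' where "U' i = (if i \<le> m then U i else {})" for i
  have "(\<Union>i\<le>k. U' i) = (\<Union>i\<le>m. U i)"
    using \<open>m \<le> k\<close> by (fastforce simp: U'_def split: if_splits)
  then have "(\<Union>i\<le>k. U' i) = X"
    using U(2) by simp
  moreover have "\<forall>x\<in>X. \<exists>i\<le>k. {y \<in> X. d x y < r} \<subseteq> U' i"
    using U(3) \<open>m \<le> k\<close> by (fastforce simp: U'_def)
  moreover have "\<forall>i\<le>k. \<forall>x\<in>U' i. diam_e d (r_component (U' i) d r x) \<le> D' r"
    using U(4) DD'[of r] r by (fastforce simp: U'_def)
  ultimately show "\<exists>U. (\<forall>i\<le>k. U i \<subseteq> X) \<and> (\<Union>i\<le>k. U i) = X \<and>
      (\<forall>x\<in>X. \<exists>i\<le>k. {y \<in> X. d x y < r} \<subseteq> U i) \<and>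
      (\<forall>i\<le>k. \<forall>x\<in>U i. diam_e d (r_component (U i) d r x) \<le> D' r)"
    using U(1) by (intro exI[of _ U']) (auto simp: U'_def)
qed

lemma dim_AN_le_imp_linear_control:
  assumes "dim_AN X d \<le> enat n"
  obtains m where "m \<le> n" "has_linear_control X d m"
proof -
  have ex: "\<exists>m. has_linear_control X d m"
    using assms by (auto simp: dim_AN_def split: if_splits)
  then have "enat (LEAST m. has_linear_control X d m) \<le> enat n"
    using assms by (simp add: dim_AN_def)
  then show ?thesis using that LeastI_ex[OF ex] by simp
qed

lemma weakly_dominates_exp_affine:
  assumes "L \<ge> 1" "C \<ge> 0"
  shows "weakly_dominates (\<lambda>t. ereal (2 powr t)) (\<lambda>t. ereal (2 powr (L * t + C)))"
proof -
  have "ereal (2 powr (L * t + C)) \<le> ereal L * ereal (2 powr (L * t + C)) + ereal C" for t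
  proof -
    have "2 powr (L * t + C) \<le> L * 2 powr (L * t + C) + C"
      using assms by (smt (verit) mult_le_cancel_right1 powr_gt_zero)
    then show ?thesis by simp
  qed
  then show ?thesis using assms unfolding weakly_dominates_def by blast
qed

locale word_group = group M for M (structure) +
  fixes S assumes S_subset: "S \<subseteq> carrier M"
begin

definition letters :: "'a set" where "letters = S \<union> m_inv M ` S"

definition eval_word :: "'a list \<Rightarrow> 'a" where "eval_word xs = foldr (\<otimes>) xs \<one>"

text \<open>For \<open>g\<close> not representable by a word, \<open>word_length M S g\<close> is the \<open>LEAST\<close> element of an
  empty set, an unspecified number; hence the representability hypotheses below.\<close>

definition representable :: "'a \<Rightarrow> bool" where
  "representable g \<longleftrightarrow> (\<exists>xs. set xs \<subseteq> letters \<and> eval_word xs = g)"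

abbreviation len :: "'a \<Rightarrow> nat" where "len \<equiv> word_length M S"

definition word_ball :: "real \<Rightarrow> 'a set" where "word_ball \<rho> = {g \<in> carrier M. real (len g) \<le> \<rho>}"

lemma letters_subset_carrier: "letters \<subseteq> carrier M"
  using S_subset by (auto simp: letters_def)

lemma inv_letter: "a \<in> letters \<Longrightarrow> inv a \<in> letters"
  using S_subset by (auto simp: letters_def)

lemma eval_word_Nil [simp]: "eval_word [] = \<one>"
  by (simp add: eval_word_def)

lemma eval_word_Cons [simp]: "eval_word (a # xs) = a \<otimes> eval_word xs"
  by (simp add: eval_word_def)

lemma eval_word_closed: "set xs \<subseteq> letters \<Longrightarrow> eval_word xs \<in> carrier M"
  using letters_subset_carrier by (induction xs) auto

lemma eval_word_append:
  "set xs \<subseteq> letters \<Longrightarrow> set ys \<subseteq> letters \<Longrightarrow> eval_word (xs @ ys) = eval_word xs \<otimes> eval_word ys"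
  using letters_subset_carrier eval_word_closed
  by (induction xs) (simp_all add: m_assoc subset_iff)

lemma eval_word_rev_inv:
  "set xs \<subseteq> letters \<Longrightarrow> eval_word (rev (map (m_inv M) xs)) = inv (eval_word xs)"
proof (induction xs)
  case (Cons a xs)
  have a: "a \<in> carrier M" using Cons letters_subset_carrier by auto
  have "set (rev (map (m_inv M) xs)) \<subseteq> letters" using Cons inv_letter by auto
  then have "eval_word (rev (map (m_inv M) (a # xs))) = inv (eval_word xs) \<otimes> inv a"
    using eval_word_append inv_letter Cons a by simp
  also have "\<dots> = inv (a \<otimes> eval_word xs)" using a eval_word_closed Cons by (simp add: inv_mult_group)
  finally show ?case by simp
qed simp

lemma word_length_le: "set xs \<subseteq> letters \<Longrightarrow> eval_word xs = g \<Longrightarrow> len g \<le> length xs"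
  unfolding word_length_def by (rule Least_le) (auto simp: letters_def eval_word_def)

lemma word_length_attained:
  assumes "representable g"
  obtains xs where "set xs \<subseteq> letters" "eval_word xs = g" "length xs = len g"
proof -
  have "\<exists>n xs. length xs = n \<and> set xs \<subseteq> S \<union> m_inv M ` S \<and> foldr (\<otimes>) xs \<one> = g"
    using assms by (auto simp: representable_def letters_def eval_word_def)
  from LeastI_ex[OF this] show ?thesis
    using that unfolding word_length_def letters_def eval_word_def by metis
qed

lemma representable_one: "representable \<one>"
  unfolding representable_def by (rule exI[of _ "[]"]) simp

lemma representable_letter: "a \<in> letters \<Longrightarrow> representable a"
  unfolding representable_def using letters_subset_carrier by (intro exI[of _ "[a]"]) auto

lemma representable_mult: "representable a \<Longrightarrow> representable b \<Longrightarrow> representable (a \<otimes> b)"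
  unfolding representable_def by (metis eval_word_append le_sup_iff set_append)

lemma generate_representable:
  assumes "generate M S = carrier M" "g \<in> carrier M"
  shows "representable g"
proof -
  have "g \<in> generate M S" using assms by simp
  then show ?thesis
    by (induction rule: generate.induct)
      (auto intro: representable_one representable_letter representable_mult simp: letters_def)
qed

lemma word_length_mult_le:
  assumes "representable a" "representable b"
  shows "len (a \<otimes> b) \<le> len a + len b"
proof -
  obtain xs ys where "set xs \<subseteq> letters" "eval_word xs = a" "length xs = len a"
    and "set ys \<subseteq> letters" "eval_word ys = b" "length ys = len b"
    using word_length_attained assms by metis
  then show ?thesis using word_length_le[of "xs @ ys"] eval_word_append by simp
qed

lemma word_length_inv_le:
  assumes "representable a"
  shows "len (inv a) \<le> len a"
proof -
  obtain xs where "set xs \<subseteq> letters" "eval_word xs = a" "length xs = len a"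
    using word_length_attained assms by metis
  moreover have "set (rev (map (m_inv M) xs)) \<subseteq> letters"
    using \<open>set xs \<subseteq> letters\<close> inv_letter by auto
  ultimately show ?thesis
    using word_length_le[of "rev (map (m_inv M) xs)" "inv a"] eval_word_rev_inv by simp
qed

lemma word_length_one: "len \<one> = 0"
  using word_length_le[of "[]"] by simp

lemma word_length_letter_le: "a \<in> letters \<Longrightarrow> len a \<le> 1"
  using word_length_le[of "[a]"] letters_subset_carrier by auto

lemma subadditive_le_word_length:
  fixes \<Phi> :: "'a \<Rightarrow> nat"
  assumes "\<Phi> \<one> = 0"
    and "\<And>a b. a \<in> carrier M \<Longrightarrow> b \<in> carrier M \<Longrightarrow> \<Phi> (a \<otimes> b) \<le> \<Phi> a + \<Phi> b"
    and "\<And>a. a \<in> letters \<Longrightarrow> \<Phi> a \<le> 1"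
    and "representable g"
  shows "\<Phi> g \<le> len g"
proof -
  have "\<Phi> (eval_word xs) \<le> length xs" if "set xs \<subseteq> letters" for xs
    using that
  proof (induction xs)
    case (Cons a xs)
    then have "\<Phi> (a \<otimes> eval_word xs) \<le> \<Phi> a + \<Phi> (eval_word xs)"
      using assms(2) letters_subset_carrier eval_word_closed by auto
    moreover have "\<Phi> a \<le> 1" using Cons.prems assms(3) by simp
    ultimately show ?case using Cons by simp
  qed (simp add: assms(1))
  moreover obtain xs where "set xs \<subseteq> letters" "eval_word xs = g" "length xs = len g"
    using word_length_attained assms(4) by metis
  ultimately show ?thesis by metis
qed

context
  assumes generated: "generate M S = carrier M"
begin

lemma word_dist_triangle:
  assumes "x \<in> carrier M" "y \<in> carrier M" "z \<in> carrier M"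
  shows "word_dist M S x z \<le> word_dist M S x y + word_dist M S y z"
proof -
  have "inv x \<otimes> z = (inv x \<otimes> y) \<otimes> (inv y \<otimes> z)"
    using assms by (simp add: m_assoc[symmetric]) (simp add: m_assoc)
  then have "len (inv x \<otimes> z) \<le> len (inv x \<otimes> y) + len (inv y \<otimes> z)"
    using word_length_mult_le generate_representable[OF generated] assms by simp
  then show ?thesis by (simp add: word_dist_def)
qed

lemma word_ball_subset_words:
  "word_ball \<rho> \<subseteq> eval_word ` {xs. set xs \<subseteq> letters \<and> length xs \<le> nat \<lfloor>\<rho>\<rfloor>}"
proof
  fix g assume g: "g \<in> word_ball \<rho>"
  then obtain xs where "set xs \<subseteq> letters" "eval_word xs = g" "length xs = len g"
    using word_length_attained generate_representable[OF generated] by (auto simp: word_ball_def)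
  moreover have "len g \<le> nat \<lfloor>\<rho>\<rfloor>" using g by (simp add: word_ball_def) linarith
  ultimately show "g \<in> eval_word ` {xs. set xs \<subseteq> letters \<and> length xs \<le> nat \<lfloor>\<rho>\<rfloor>}" by auto
qed

context
  assumes finite_S: "finite S"
begin

lemma finite_words: "finite {xs. set xs \<subseteq> letters \<and> length xs \<le> n}"
  by (rule finite_lists_length_le) (simp add: letters_def finite_S)

lemma finite_word_ball: "finite (word_ball \<rho>)"
  using word_ball_subset_words finite_words finite_subset by blast

lemma card_word_ball_le: "card (word_ball \<rho>) \<le> (card letters + 1) ^ nat \<lfloor>\<rho>\<rfloor>"
proof -
  have sum_powers_le: "(\<Sum>i\<le>n. c ^ i) \<le> (c + 1) ^ n" for c n :: nat
  proof (induction n)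
    case (Suc n)
    have "(\<Sum>i\<le>Suc n. c ^ i) = 1 + (\<Sum>i\<le>n. c * c ^ i)"
      by (simp only: sum.atMost_Suc_shift power_Suc power_0)
    also have "\<dots> = 1 + c * (\<Sum>i\<le>n. c ^ i)"
      by (simp add: sum_distrib_left)
    also have "\<dots> \<le> 1 + c * (c + 1) ^ n" using Suc by simp
    also have "\<dots> \<le> (c + 1) ^ n + c * (c + 1) ^ n" by simp
    finally show ?case by simp
  qed simp
  let ?words = "{xs. set xs \<subseteq> letters \<and> length xs \<le> nat \<lfloor>\<rho>\<rfloor>}"
  have "card (word_ball \<rho>) \<le> card (eval_word ` ?words)"
    by (rule card_mono[OF finite_imageI[OF finite_words] word_ball_subset_words])
  also have "\<dots> \<le> card ?words"
    by (rule card_image_le[OF finite_words])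
  also have "\<dots> = (\<Sum>i\<le>nat \<lfloor>\<rho>\<rfloor>. card letters ^ i)"
    using finite_S by (intro card_lists_length_le) (simp add: letters_def)
  finally show ?thesis using sum_powers_le order_trans by blast
qed

end

end

end

section \<open>The wreath product\<close>

locale wreath_groups = G: group G + H: group H for G :: "'g monoid" and H :: "'h monoid"
begin

abbreviation W where "W \<equiv> wreath H G"

definition supp :: "('g \<Rightarrow> 'h) \<Rightarrow> 'g set" where
  "supp f = {x \<in> carrier G. f x \<noteq> \<one>\<^bsub>H\<^esub>}"

definition no_lamps :: "'g \<Rightarrow> 'h" where
  "no_lamps = (\<lambda>x\<in>carrier G. \<one>\<^bsub>H\<^esub>)"

definition lamp :: "'g \<Rightarrow> 'h \<Rightarrow> 'g \<Rightarrow> 'h" where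
  "lamp x h = (\<lambda>y\<in>carrier G. if y = x then h else \<one>\<^bsub>H\<^esub>)"

definition move :: "'g \<Rightarrow> ('g \<Rightarrow> 'h) \<times> 'g" where
  "move g = (no_lamps, g)"

definition changed_lamps :: "('g \<Rightarrow> 'h) \<times> 'g \<Rightarrow> ('g \<Rightarrow> 'h) \<times> 'g \<Rightarrow> 'g set" where
  "changed_lamps a b = {u \<in> carrier G. fst a u \<noteq> fst b u}"

lemma supp_restrict: "supp (\<lambda>u\<in>carrier G. F u) = {u \<in> carrier G. F u \<noteq> \<one>\<^bsub>H\<^esub>}"
  by (auto simp: supp_def)

lemma wreath_carrier_iff:
  "(f, g) \<in> carrier W \<longleftrightarrow>
     f \<in> extensional (carrier G) \<and> f ` carrier G \<subseteq> carrier H \<and> finite (supp f) \<and> g \<in> carrier G"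
  by (simp add: wreath_def supp_def)

lemma wreath_mult_eq:
  "(f1, g1) \<otimes>\<^bsub>W\<^esub> (f2, g2) =
     ((\<lambda>x\<in>carrier G. f1 x \<otimes>\<^bsub>H\<^esub> f2 (inv\<^bsub>G\<^esub> g1 \<otimes>\<^bsub>G\<^esub> x)), g1 \<otimes>\<^bsub>G\<^esub> g2)"
  by (simp add: wreath_def)

lemma wreath_one_eq: "\<one>\<^bsub>W\<^esub> = (no_lamps, \<one>\<^bsub>G\<^esub>)"
  by (simp add: wreath_def no_lamps_def)

lemma translate_set_eq:
  assumes "g \<in> carrier G"
  shows "{u \<in> carrier G. P (g \<otimes>\<^bsub>G\<^esub> u)} = (\<lambda>u. inv\<^bsub>G\<^esub> g \<otimes>\<^bsub>G\<^esub> u) ` {u \<in> carrier G. P u}"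
proof (intro equalityI subsetI)
  fix u assume "u \<in> {u \<in> carrier G. P (g \<otimes>\<^bsub>G\<^esub> u)}"
  moreover have "u = inv\<^bsub>G\<^esub> g \<otimes>\<^bsub>G\<^esub> (g \<otimes>\<^bsub>G\<^esub> u)" if "u \<in> carrier G"
    using assms that by (simp add: G.m_assoc[symmetric])
  ultimately show "u \<in> (\<lambda>u. inv\<^bsub>G\<^esub> g \<otimes>\<^bsub>G\<^esub> u) ` {u \<in> carrier G. P u}"
    using assms by auto
qed (use assms in \<open>auto simp: G.m_assoc[symmetric]\<close>)

lemma supp_mult_subset:
  assumes "g1 \<in> carrier G"
  shows "supp (\<lambda>x\<in>carrier G. f1 x \<otimes>\<^bsub>H\<^esub> f2 (inv\<^bsub>G\<^esub> g1 \<otimes>\<^bsub>G\<^esub> x))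
    \<subseteq> supp f1 \<union> (\<lambda>y. g1 \<otimes>\<^bsub>G\<^esub> y) ` supp f2"
proof -
  have "{x \<in> carrier G. f2 (inv\<^bsub>G\<^esub> g1 \<otimes>\<^bsub>G\<^esub> x) \<noteq> \<one>\<^bsub>H\<^esub>} = (\<lambda>y. g1 \<otimes>\<^bsub>G\<^esub> y) ` supp f2"
    using translate_set_eq[of "inv\<^bsub>G\<^esub> g1"] assms by (simp add: supp_def)
  then show ?thesis by (auto simp: supp_restrict supp_def)
qed

lemma wreath_left_inverse:
  assumes "(f, g) \<in> carrier W"
  shows "((\<lambda>u\<in>carrier G. inv\<^bsub>H\<^esub> f (g \<otimes>\<^bsub>G\<^esub> u)), inv\<^bsub>G\<^esub> g) \<in> carrier W"
    and "((\<lambda>u\<in>carrier G. inv\<^bsub>H\<^esub> f (g \<otimes>\<^bsub>G\<^esub> u)), inv\<^bsub>G\<^esub> g) \<otimes>\<^bsub>W\<^esub> (f, g) = \<one>\<^bsub>W\<^esub>"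
proof -
  have f: "f \<in> extensional (carrier G)" "f ` carrier G \<subseteq> carrier H" "finite (supp f)"
    and g: "g \<in> carrier G" using assms by (auto simp: wreath_carrier_iff)
  have "{u \<in> carrier G. inv\<^bsub>H\<^esub> f u \<noteq> \<one>\<^bsub>H\<^esub>} = supp f"
    using f(2) by (auto simp: supp_def)
  then have "supp (\<lambda>u\<in>carrier G. inv\<^bsub>H\<^esub> f (g \<otimes>\<^bsub>G\<^esub> u)) = (\<lambda>u. inv\<^bsub>G\<^esub> g \<otimes>\<^bsub>G\<^esub> u) ` supp f"
    using translate_set_eq[OF g, of "\<lambda>v. inv\<^bsub>H\<^esub> f v \<noteq> \<one>\<^bsub>H\<^esub>"] by (simp add: supp_restrict)
  then show "((\<lambda>u\<in>carrier G. inv\<^bsub>H\<^esub> f (g \<otimes>\<^bsub>G\<^esub> u)), inv\<^bsub>G\<^esub> g) \<in> carrier W"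
    using f g by (auto simp: wreath_carrier_iff image_subset_iff)
  show "((\<lambda>u\<in>carrier G. inv\<^bsub>H\<^esub> f (g \<otimes>\<^bsub>G\<^esub> u)), inv\<^bsub>G\<^esub> g) \<otimes>\<^bsub>W\<^esub> (f, g) = \<one>\<^bsub>W\<^esub>"
    using f g by (auto simp: wreath_mult_eq wreath_one_eq no_lamps_def image_subset_iff intro!: ext)
qed

lemma group_wreath: "group W"
proof (rule groupI)
  fix a b assume ab: "a \<in> carrier W" "b \<in> carrier W"
  obtain f1 g1 f2 g2 where e: "a = (f1, g1)" "b = (f2, g2)" by fastforce
  have "finite (supp (\<lambda>x\<in>carrier G. f1 x \<otimes>\<^bsub>H\<^esub> f2 (inv\<^bsub>G\<^esub> g1 \<otimes>\<^bsub>G\<^esub> x)))"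
    using ab e supp_mult_subset[of g1 f1 f2]
    by (auto simp: wreath_carrier_iff intro: finite_subset)
  then show "a \<otimes>\<^bsub>W\<^esub> b \<in> carrier W"
    using ab unfolding e wreath_mult_eq wreath_carrier_iff by (auto simp: image_subset_iff)
next
  show "\<one>\<^bsub>W\<^esub> \<in> carrier W"
    by (auto simp: wreath_one_eq wreath_carrier_iff no_lamps_def supp_def)
next
  fix a b c assume abc: "a \<in> carrier W" "b \<in> carrier W" "c \<in> carrier W"
  obtain f1 g1 f2 g2 f3 g3 where e: "a = (f1, g1)" "b = (f2, g2)" "c = (f3, g3)"
    by (metis surj_pair)
  have "f1 ` carrier G \<subseteq> carrier H" "g1 \<in> carrier G" "f2 ` carrier G \<subseteq> carrier H"
    "g2 \<in> carrier G" "f3 ` carrier G \<subseteq> carrier H" "g3 \<in> carrier G"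
    using abc e by (auto simp: wreath_carrier_iff)
  then show "a \<otimes>\<^bsub>W\<^esub> b \<otimes>\<^bsub>W\<^esub> c = a \<otimes>\<^bsub>W\<^esub> (b \<otimes>\<^bsub>W\<^esub> c)"
    unfolding e wreath_mult_eq
    by (auto simp: H.m_assoc G.m_assoc G.inv_mult_group image_subset_iff intro!: ext)
next
  fix a assume a: "a \<in> carrier W"
  obtain f g where e: "a = (f, g)" by fastforce
  have "f \<in> extensional (carrier G)" "f ` carrier G \<subseteq> carrier H" "g \<in> carrier G"
    using a e by (auto simp: wreath_carrier_iff)
  then show "\<one>\<^bsub>W\<^esub> \<otimes>\<^bsub>W\<^esub> a = a"
    unfolding e wreath_one_eq wreath_mult_eq no_lamps_def
    by (auto simp: image_subset_iff extensional_def intro!: ext)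
  show "\<exists>b\<in>carrier W. b \<otimes>\<^bsub>W\<^esub> a = \<one>\<^bsub>W\<^esub>"
    using wreath_left_inverse a e by blast
qed

sublocale W: group W
  by (rule group_wreath)

lemma wreath_inv_eq:
  assumes "(f, g) \<in> carrier W"
  shows "inv\<^bsub>W\<^esub> (f, g) = ((\<lambda>u\<in>carrier G. inv\<^bsub>H\<^esub> f (g \<otimes>\<^bsub>G\<^esub> u)), inv\<^bsub>G\<^esub> g)"
  using W.inv_equality wreath_left_inverse assms by blast

lemma wreath_inv_mult_eq:
  assumes "(f1, g1) \<in> carrier W" "(f2, g2) \<in> carrier W"
  shows "inv\<^bsub>W\<^esub> (f1, g1) \<otimes>\<^bsub>W\<^esub> (f2, g2) =
     ((\<lambda>u\<in>carrier G. inv\<^bsub>H\<^esub> f1 (g1 \<otimes>\<^bsub>G\<^esub> u) \<otimes>\<^bsub>H\<^esub> f2 (g1 \<otimes>\<^bsub>G\<^esub> u)), inv\<^bsub>G\<^esub> g1 \<otimes>\<^bsub>G\<^esub> g2)"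
  using assms unfolding wreath_inv_eq[OF assms(1)] wreath_mult_eq
  by (auto simp: wreath_carrier_iff intro!: ext)

lemma supp_inv_mult_eq:
  assumes "a \<in> carrier W" "b \<in> carrier W"
  shows "supp (fst (inv\<^bsub>W\<^esub> a \<otimes>\<^bsub>W\<^esub> b)) = (\<lambda>u. inv\<^bsub>G\<^esub> snd a \<otimes>\<^bsub>G\<^esub> u) ` changed_lamps a b"
proof -
  obtain f1 g1 f2 g2 where e: "a = (f1, g1)" "b = (f2, g2)" by fastforce
  have c: "f1 ` carrier G \<subseteq> carrier H" "f2 ` carrier G \<subseteq> carrier H" "g1 \<in> carrier G"
    using assms e by (auto simp: wreath_carrier_iff)
  have "inv\<^bsub>H\<^esub> x \<otimes>\<^bsub>H\<^esub> y = \<one>\<^bsub>H\<^esub> \<longleftrightarrow> x = y" if "x \<in> carrier H" "y \<in> carrier H" for x y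
    using that by (metis H.inv_closed H.inv_equality H.inv_inv H.r_inv)
  then have "{u \<in> carrier G. inv\<^bsub>H\<^esub> f1 u \<otimes>\<^bsub>H\<^esub> f2 u \<noteq> \<one>\<^bsub>H\<^esub>} = changed_lamps a b"
    using c by (auto simp: changed_lamps_def e image_subset_iff)
  then show ?thesis
    using translate_set_eq[OF c(3), of "\<lambda>v. inv\<^bsub>H\<^esub> f1 v \<otimes>\<^bsub>H\<^esub> f2 v \<noteq> \<one>\<^bsub>H\<^esub>"]
    by (simp add: wreath_inv_mult_eq assms[unfolded e] supp_restrict e)
qed

lemma card_supp_inv_mult_eq:
  assumes "a \<in> carrier W" "b \<in> carrier W"
  shows "card (supp (fst (inv\<^bsub>W\<^esub> a \<otimes>\<^bsub>W\<^esub> b))) = card (changed_lamps a b)"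
proof -
  have "snd a \<in> carrier G" using assms by (cases a) (simp add: wreath_carrier_iff)
  then have "inj_on (\<lambda>u. inv\<^bsub>G\<^esub> snd a \<otimes>\<^bsub>G\<^esub> u) (changed_lamps a b)"
    by (auto simp: inj_on_def changed_lamps_def)
  then show ?thesis using supp_inv_mult_eq[OF assms] card_image by simp
qed

lemma move_carrier: "g \<in> carrier G \<Longrightarrow> move g \<in> carrier W"
  by (auto simp: move_def wreath_carrier_iff no_lamps_def supp_def)

lemma move_mult: "a \<in> carrier G \<Longrightarrow> b \<in> carrier G \<Longrightarrow> move a \<otimes>\<^bsub>W\<^esub> move b = move (a \<otimes>\<^bsub>G\<^esub> b)"
  by (auto simp: move_def wreath_mult_eq no_lamps_def intro!: ext)

lemma move_one: "move \<one>\<^bsub>G\<^esub> = \<one>\<^bsub>W\<^esub>"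
  by (simp add: move_def wreath_one_eq)

lemma move_inv: "a \<in> carrier G \<Longrightarrow> inv\<^bsub>W\<^esub> (move a) = move (inv\<^bsub>G\<^esub> a)"
  using move_carrier[of a] unfolding move_def by (auto simp: wreath_inv_eq no_lamps_def intro!: ext)

lemma lamp_carrier:
  assumes "x \<in> carrier G" "h \<in> carrier H"
  shows "(lamp x h, \<one>\<^bsub>G\<^esub>) \<in> carrier W"
proof -
  have "supp (lamp x h) \<subseteq> {x}" by (auto simp: supp_def lamp_def)
  then show ?thesis using assms finite_subset by (auto simp: wreath_carrier_iff lamp_def)
qed

lemma lamp_inv:
  "h \<in> carrier H \<Longrightarrow> inv\<^bsub>W\<^esub> (lamp \<one>\<^bsub>G\<^esub> h, \<one>\<^bsub>G\<^esub>) = (lamp \<one>\<^bsub>G\<^esub> (inv\<^bsub>H\<^esub> h), \<one>\<^bsub>G\<^esub>)"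
  using lamp_carrier[of "\<one>\<^bsub>G\<^esub>" h] by (auto simp: wreath_inv_eq lamp_def intro!: ext)

lemma lamp_conjugate:
  assumes "x \<in> carrier G" "h \<in> carrier H"
  shows "move x \<otimes>\<^bsub>W\<^esub> (lamp \<one>\<^bsub>G\<^esub> h, \<one>\<^bsub>G\<^esub>) \<otimes>\<^bsub>W\<^esub> move (inv\<^bsub>G\<^esub> x) = (lamp x h, \<one>\<^bsub>G\<^esub>)"
proof -
  have "inv\<^bsub>G\<^esub> x \<otimes>\<^bsub>G\<^esub> y = \<one>\<^bsub>G\<^esub> \<longleftrightarrow> y = x" if "y \<in> carrier G" for y
    using assms that by (metis G.inv_closed G.inv_inv G.inv_equality G.r_inv)
  then show ?thesis
    using assms by (auto simp: move_def wreath_mult_eq no_lamps_def lamp_def intro!: ext)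
qed

lemma mult_lamp_eq:
  assumes "(f, \<one>\<^bsub>G\<^esub>) \<in> carrier W" "x \<in> carrier G" "h \<in> carrier H"
  shows "(f, \<one>\<^bsub>G\<^esub>) \<otimes>\<^bsub>W\<^esub> (lamp x h, \<one>\<^bsub>G\<^esub>) =
     ((\<lambda>y\<in>carrier G. if y = x then f x \<otimes>\<^bsub>H\<^esub> h else f y), \<one>\<^bsub>G\<^esub>)"
  using assms by (auto simp: wreath_mult_eq lamp_def wreath_carrier_iff image_subset_iff intro!: ext)

lemma mult_move_eq:
  assumes "(f, \<one>\<^bsub>G\<^esub>) \<in> carrier W" "g \<in> carrier G"
  shows "(f, \<one>\<^bsub>G\<^esub>) \<otimes>\<^bsub>W\<^esub> move g = (f, g)"
  using assms
  by (auto simp: wreath_mult_eq move_def no_lamps_def wreath_carrier_iff extensional_def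
      image_subset_iff intro!: ext)

lemma snd_wreath_carrier: "w \<in> carrier W \<Longrightarrow> snd w \<in> carrier G"
  by (cases w) (simp add: wreath_carrier_iff)

lemma finite_supp_fst: "w \<in> carrier W \<Longrightarrow> finite (supp (fst w))"
  by (cases w) (simp add: wreath_carrier_iff)

lemma snd_wreath_mult: "snd (a \<otimes>\<^bsub>W\<^esub> b) = snd a \<otimes>\<^bsub>G\<^esub> snd b"
  by (cases a, cases b) (simp add: wreath_mult_eq)

lemma supp_fst_wreath_mult:
  "a \<in> carrier W \<Longrightarrow> supp (fst (a \<otimes>\<^bsub>W\<^esub> b)) \<subseteq> supp (fst a) \<union> (\<lambda>y. snd a \<otimes>\<^bsub>G\<^esub> y) ` supp (fst b)"
  by (cases a, cases b) (simp add: wreath_mult_eq supp_mult_subset wreath_carrier_iff)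

lemma changed_lamps_subset_supp:
  "changed_lamps a b \<subseteq> supp (fst a) \<union> supp (fst b)"
  by (auto simp: changed_lamps_def supp_def)

end

locale wreath_word = wreath_groups G H for G :: "'g monoid" and H :: "'h monoid" +
  fixes S :: "'g set"
  assumes S_subset: "S \<subseteq> carrier G" and generated: "generate G S = carrier G"
    and finite_S: "finite S"
begin

abbreviation gens where "gens \<equiv> wreath_gens H G S"
abbreviation dG where "dG \<equiv> word_dist G S"
abbreviation dW where "dW \<equiv> word_dist W gens"

lemma gens_eq: "gens = {(lamp \<one>\<^bsub>G\<^esub> h, \<one>\<^bsub>G\<^esub>) | h. h \<in> carrier H - {\<one>\<^bsub>H\<^esub>}} \<union> move ` S"
  by (auto simp: wreath_gens_def lamp_def move_def no_lamps_def)

lemma gens_subset: "gens \<subseteq> carrier W"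
  using lamp_carrier move_carrier S_subset unfolding gens_eq by blast

sublocale G: word_group G S
  by unfold_locales (rule S_subset)

sublocale W: word_group W gens
  by unfold_locales (rule gens_subset)

lemma G_representable: "g \<in> carrier G \<Longrightarrow> G.representable g"
  using G.generate_representable[OF generated] .

lemma move_letter:
  assumes "a \<in> G.letters"
  shows "move a \<in> W.letters"
proof -
  have "move s \<in> gens" if "s \<in> S" for s using that unfolding gens_eq by blast
  moreover have "move (inv\<^bsub>G\<^esub> s) = inv\<^bsub>W\<^esub> (move s)" if "s \<in> S" for s
    using that S_subset move_inv by auto
  ultimately show ?thesis using assms unfolding G.letters_def W.letters_def by auto
qed

lemma lamp_letter: "h \<in> carrier H \<Longrightarrow> h \<noteq> \<one>\<^bsub>H\<^esub> \<Longrightarrow> (lamp \<one>\<^bsub>G\<^esub> h, \<one>\<^bsub>G\<^esub>) \<in> W.letters"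
  unfolding W.letters_def unfolding gens_eq by auto

lemma wreath_letter_cases:
  assumes "a \<in> W.letters"
  obtains h where "h \<in> carrier H" "a = (lamp \<one>\<^bsub>G\<^esub> h, \<one>\<^bsub>G\<^esub>)"
    | s where "s \<in> G.letters" "a = move s"
proof -
  have "a \<in> gens \<or> a \<in> m_inv W ` gens" using assms by (simp add: W.letters_def)
  then consider h where "h \<in> carrier H" "a = (lamp \<one>\<^bsub>G\<^esub> h, \<one>\<^bsub>G\<^esub>) \<or> a = inv\<^bsub>W\<^esub> (lamp \<one>\<^bsub>G\<^esub> h, \<one>\<^bsub>G\<^esub>)"
    | s where "s \<in> S" "a = move s \<or> a = inv\<^bsub>W\<^esub> (move s)"
    unfolding gens_eq by blast
  then show ?thesis
  proof cases
    case 1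
    then show ?thesis using that(1) lamp_inv by auto
  next
    case 2
    then show ?thesis using that(2) move_inv S_subset by (auto simp: G.letters_def)
  qed
qed

lemma eval_word_map_move:
  "set xs \<subseteq> G.letters \<Longrightarrow> W.eval_word (map move xs) = move (G.eval_word xs)"
  by (induction xs) (auto simp: move_one move_mult G.eval_word_closed G.letters_subset_carrier[THEN subsetD])

lemma word_length_move_le:
  assumes "g \<in> carrier G"
  shows "W.representable (move g)" and "W.len (move g) \<le> G.len g"
proof -
  obtain xs where xs: "set xs \<subseteq> G.letters" "G.eval_word xs = g" "length xs = G.len g"
    using G.word_length_attained G_representable assms by blast
  have "set (map move xs) \<subseteq> W.letters" using xs(1) move_letter by auto
  moreover have "W.eval_word (map move xs) = move g" using xs eval_word_map_move by simp
  ultimately show "W.representable (move g)" "W.len (move g) \<le> G.len g"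
    using xs(3) W.word_length_le[of "map move xs"] unfolding W.representable_def by (blast, simp)
qed

lemma word_length_lamp_le:
  assumes "x \<in> carrier G" "h \<in> carrier H"
  shows "W.representable (lamp x h, \<one>\<^bsub>G\<^esub>)" and "W.len (lamp x h, \<one>\<^bsub>G\<^esub>) \<le> 2 * G.len x + 1"
proof -
  consider "h = \<one>\<^bsub>H\<^esub>" | "(lamp \<one>\<^bsub>G\<^esub> h, \<one>\<^bsub>G\<^esub>) \<in> W.letters"
    using lamp_letter assms by blast
  then have l: "W.representable (lamp \<one>\<^bsub>G\<^esub> h, \<one>\<^bsub>G\<^esub>) \<and> W.len (lamp \<one>\<^bsub>G\<^esub> h, \<one>\<^bsub>G\<^esub>) \<le> 1"
  proof cases
    case 1
    then have "(lamp \<one>\<^bsub>G\<^esub> h, \<one>\<^bsub>G\<^esub>) = \<one>\<^bsub>W\<^esub>" by (auto simp: lamp_def wreath_one_eq no_lamps_def)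
    then show ?thesis using W.representable_one W.word_length_one by simp
  qed (use W.representable_letter W.word_length_letter_le in blast)
  have ix: "inv\<^bsub>G\<^esub> x \<in> carrier G" using assms by simp
  note mx = word_length_move_le[OF assms(1)] and mix = word_length_move_le[OF ix]
  have "G.len (inv\<^bsub>G\<^esub> x) \<le> G.len x" using G.word_length_inv_le G_representable assms by blast
  have e: "(lamp x h, \<one>\<^bsub>G\<^esub>) = move x \<otimes>\<^bsub>W\<^esub> (lamp \<one>\<^bsub>G\<^esub> h, \<one>\<^bsub>G\<^esub>) \<otimes>\<^bsub>W\<^esub> move (inv\<^bsub>G\<^esub> x)"
    using lamp_conjugate assms by simp
  have r: "W.representable (move x \<otimes>\<^bsub>W\<^esub> (lamp \<one>\<^bsub>G\<^esub> h, \<one>\<^bsub>G\<^esub>))"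
    using W.representable_mult mx(1) l by blast
  then show "W.representable (lamp x h, \<one>\<^bsub>G\<^esub>)"
    unfolding e using W.representable_mult mix(1) by blast
  have "W.len (lamp x h, \<one>\<^bsub>G\<^esub>)
      \<le> W.len (move x \<otimes>\<^bsub>W\<^esub> (lamp \<one>\<^bsub>G\<^esub> h, \<one>\<^bsub>G\<^esub>)) + W.len (move (inv\<^bsub>G\<^esub> x))"
    unfolding e using W.word_length_mult_le r mix(1) by blast
  also have "\<dots> \<le> W.len (move x) + W.len (lamp \<one>\<^bsub>G\<^esub> h, \<one>\<^bsub>G\<^esub>) + W.len (move (inv\<^bsub>G\<^esub> x))"
    using W.word_length_mult_le mx(1) l by simp
  also have "\<dots> \<le> 2 * G.len x + 1"
    using mx(2) mix(2) l \<open>G.len (inv\<^bsub>G\<^esub> x) \<le> G.len x\<close> by simp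
  finally show "W.len (lamp x h, \<one>\<^bsub>G\<^esub>) \<le> 2 * G.len x + 1" .
qed

lemma word_length_lamps_le:
  assumes "(\<phi>, \<one>\<^bsub>G\<^esub>) \<in> carrier W" and "\<forall>u\<in>supp \<phi>. real (G.len u) \<le> B"
  shows "W.representable (\<phi>, \<one>\<^bsub>G\<^esub>)" and "real (W.len (\<phi>, \<one>\<^bsub>G\<^esub>)) \<le> real (card (supp \<phi>)) * (2 * B + 1)"
proof -
  have "W.representable (\<phi>, \<one>\<^bsub>G\<^esub>) \<and> real (W.len (\<phi>, \<one>\<^bsub>G\<^esub>)) \<le> real n * (2 * B + 1)"
    if "(\<phi>, \<one>\<^bsub>G\<^esub>) \<in> carrier W" "card (supp \<phi>) = n" "\<forall>u\<in>supp \<phi>. real (G.len u) \<le> B" for n \<phi>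
    using that
  proof (induction n arbitrary: \<phi>)
    case 0
    then have "\<phi> \<in> extensional (carrier G)" "supp \<phi> = {}"
      by (auto simp: wreath_carrier_iff)
    then have "(\<phi>, \<one>\<^bsub>G\<^esub>) = \<one>\<^bsub>W\<^esub>"
      by (auto simp: wreath_one_eq supp_def no_lamps_def extensional_def intro!: ext)
    then show ?case using W.representable_one W.word_length_one by simp
  next
    case (Suc n)
    have c: "\<phi> \<in> extensional (carrier G)" "\<phi> ` carrier G \<subseteq> carrier H" "finite (supp \<phi>)"
      using Suc.prems by (auto simp: wreath_carrier_iff)
    obtain x where x: "x \<in> supp \<phi>" using Suc.prems by fastforce
    have xc: "x \<in> carrier G" and hx: "\<phi> x \<in> carrier H" using x c by (auto simp: supp_def)
    define \<phi>' where "\<phi>' = (\<lambda>y\<in>carrier G. if y = x then \<one>\<^bsub>H\<^esub> else \<phi> y)"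
    have s': "supp \<phi>' = supp \<phi> - {x}" by (auto simp: supp_def \<phi>'_def)
    have c': "(\<phi>', \<one>\<^bsub>G\<^esub>) \<in> carrier W" using c s' by (auto simp: wreath_carrier_iff \<phi>'_def)
    have IH: "W.representable (\<phi>', \<one>\<^bsub>G\<^esub>) \<and> real (W.len (\<phi>', \<one>\<^bsub>G\<^esub>)) \<le> real n * (2 * B + 1)"
      using Suc.IH[OF c'] Suc.prems s' x c by auto
    have e: "(\<phi>, \<one>\<^bsub>G\<^esub>) = (\<phi>', \<one>\<^bsub>G\<^esub>) \<otimes>\<^bsub>W\<^esub> (lamp x (\<phi> x), \<one>\<^bsub>G\<^esub>)"
      using mult_lamp_eq[OF c' xc hx] hx c by (auto simp: \<phi>'_def extensional_def intro!: ext)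
    note L = word_length_lamp_le[OF xc hx]
    have "W.len (\<phi>, \<one>\<^bsub>G\<^esub>) \<le> W.len (\<phi>', \<one>\<^bsub>G\<^esub>) + W.len (lamp x (\<phi> x), \<one>\<^bsub>G\<^esub>)"
      unfolding e using W.word_length_mult_le IH L by blast
    moreover have "real (G.len x) \<le> B" using Suc.prems x by auto
    ultimately have "real (W.len (\<phi>, \<one>\<^bsub>G\<^esub>)) \<le> real (Suc n) * (2 * B + 1)"
      using IH L by (simp add: algebra_simps)
    then show ?case using W.representable_mult IH L e by metis
  qed
  then show "W.representable (\<phi>, \<one>\<^bsub>G\<^esub>)" "real (W.len (\<phi>, \<one>\<^bsub>G\<^esub>)) \<le> real (card (supp \<phi>)) * (2 * B + 1)"
    using assms by auto
qed

lemma wreath_representable: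
  assumes "w \<in> carrier W"
  shows "W.representable w"
proof -
  obtain f g where e: "w = (f, g)" by fastforce
  have c: "(f, \<one>\<^bsub>G\<^esub>) \<in> carrier W" "g \<in> carrier G" "finite (supp f)"
    using assms e by (auto simp: wreath_carrier_iff)
  have "\<forall>u\<in>supp f. real (G.len u) \<le> (\<Sum>v\<in>supp f. real (G.len v))"
    using member_le_sum[OF _ _ c(3)] by (metis of_nat_0_le_iff)
  then have "W.representable (f, \<one>\<^bsub>G\<^esub>)" using word_length_lamps_le(1)[OF c(1)] by blast
  then show ?thesis
    using W.representable_mult word_length_move_le(1)[OF c(2)] mult_move_eq[OF c(1,2)] e by metis
qed

lemma card_supp_le_word_length:
  assumes "w \<in> carrier W"
  shows "card (supp (fst w)) \<le> W.len w"
proof (rule W.subadditive_le_word_length[where \<Phi> = "\<lambda>w. card (supp (fst w))"])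
  show "card (supp (fst \<one>\<^bsub>W\<^esub>)) = 0" by (simp add: wreath_one_eq supp_def no_lamps_def)
  show "card (supp (fst (a \<otimes>\<^bsub>W\<^esub> b))) \<le> card (supp (fst a)) + card (supp (fst b))"
    if ab: "a \<in> carrier W" "b \<in> carrier W" for a b
  proof -
    have f: "finite (supp (fst a))" "finite (supp (fst b))" using finite_supp_fst ab by auto
    have "card (supp (fst (a \<otimes>\<^bsub>W\<^esub> b))) \<le> card (supp (fst a) \<union> (\<lambda>y. snd a \<otimes>\<^bsub>G\<^esub> y) ` supp (fst b))"
      using f supp_fst_wreath_mult[OF ab(1)] by (intro card_mono) auto
    also have "\<dots> \<le> card (supp (fst a)) + card ((\<lambda>y. snd a \<otimes>\<^bsub>G\<^esub> y) ` supp (fst b))"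
      by (rule card_Un_le)
    also have "\<dots> \<le> card (supp (fst a)) + card (supp (fst b))"
      using card_image_le f by auto
    finally show ?thesis .
  qed
  show "card (supp (fst a)) \<le> 1" if "a \<in> W.letters" for a
  proof -
    have "supp (fst a) \<subseteq> {\<one>\<^bsub>G\<^esub>}"
      using that by (cases rule: wreath_letter_cases) (auto simp: move_def supp_def lamp_def no_lamps_def)
    then show ?thesis using subset_singletonD by fastforce
  qed
qed (rule wreath_representable[OF assms])

text \<open>The lamplighter has to end at \<open>snd w\<close> and to pass by every lit lamp, so none of these
  points is farther from \<open>\<one>\<close> than the word length of \<open>w\<close>.\<close>

definition reach_radius :: "('g \<Rightarrow> 'h) \<times> 'g \<Rightarrow> nat" where
  "reach_radius w = Max (insert (G.len (snd w)) ((\<lambda>u. Suc (G.len u)) ` supp (fst w)))"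

lemma position_le_reach_radius: "w \<in> carrier W \<Longrightarrow> G.len (snd w) \<le> reach_radius w"
  unfolding reach_radius_def using finite_supp_fst by (intro Max_ge) auto

lemma lamp_le_reach_radius:
  "w \<in> carrier W \<Longrightarrow> u \<in> supp (fst w) \<Longrightarrow> Suc (G.len u) \<le> reach_radius w"
  unfolding reach_radius_def using finite_supp_fst by (intro Max_ge) auto

lemma reach_radius_le:
  assumes "w \<in> carrier W" "G.len (snd w) \<le> k" "\<And>u. u \<in> supp (fst w) \<Longrightarrow> Suc (G.len u) \<le> k"
  shows "reach_radius w \<le> k"
  unfolding reach_radius_def using assms finite_supp_fst by (subst Max_le_iff) auto

lemma reach_radius_mult_le:
  assumes ab: "a \<in> carrier W" "b \<in> carrier W"
  shows "reach_radius (a \<otimes>\<^bsub>W\<^esub> b) \<le> reach_radius a + reach_radius b"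
proof (rule reach_radius_le)
  have c: "snd a \<in> carrier G" "snd b \<in> carrier G" using snd_wreath_carrier ab by auto
  have translate: "G.len (snd a \<otimes>\<^bsub>G\<^esub> v) \<le> reach_radius a + G.len v" if "v \<in> carrier G" for v
    using G.word_length_mult_le[OF G_representable G_representable] c that
      position_le_reach_radius[OF ab(1)] by fastforce
  show "G.len (snd (a \<otimes>\<^bsub>W\<^esub> b)) \<le> reach_radius a + reach_radius b"
    using translate[OF c(2)] position_le_reach_radius[OF ab(2)] by (simp add: snd_wreath_mult)
  fix u assume "u \<in> supp (fst (a \<otimes>\<^bsub>W\<^esub> b))"
  then consider "u \<in> supp (fst a)" | v where "v \<in> supp (fst b)" "u = snd a \<otimes>\<^bsub>G\<^esub> v"
    using supp_fst_wreath_mult[OF ab(1)] by blast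
  then show "Suc (G.len u) \<le> reach_radius a + reach_radius b"
  proof cases
    case 1
    then show ?thesis using lamp_le_reach_radius[OF ab(1)] by fastforce
  next
    case (2 v)
    then show ?thesis
      using translate[of v] lamp_le_reach_radius[OF ab(2)] by (fastforce simp: supp_def)
  qed
qed (use ab in simp)

lemma reach_radius_le_word_length:
  assumes "w \<in> carrier W"
  shows "reach_radius w \<le> W.len w"
proof (rule W.subadditive_le_word_length)
  show "reach_radius \<one>\<^bsub>W\<^esub> = 0"
    by (simp add: reach_radius_def wreath_one_eq G.word_length_one supp_def no_lamps_def)
  show "reach_radius a \<le> 1" if "a \<in> W.letters" for a
  proof (rule reach_radius_le)
    show "a \<in> carrier W" using that W.letters_subset_carrier by blast
    show "G.len (snd a) \<le> 1"
      using \<open>a \<in> W.letters\<close>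
      by (cases rule: wreath_letter_cases) (auto simp: move_def G.word_length_one dest: G.word_length_letter_le)
    show "Suc (G.len u) \<le> 1" if "u \<in> supp (fst a)" for u
      using \<open>a \<in> W.letters\<close> that
      by (cases rule: wreath_letter_cases)
        (auto simp: move_def supp_def lamp_def no_lamps_def G.word_length_one split: if_splits)
  qed
qed (use reach_radius_mult_le wreath_representable assms in auto)

lemma word_length_position_le: "w \<in> carrier W \<Longrightarrow> G.len (snd w) \<le> W.len w"
  using position_le_reach_radius reach_radius_le_word_length le_trans by blast

lemma snd_inv_mult:
  "a \<in> carrier W \<Longrightarrow> b \<in> carrier W \<Longrightarrow> snd (inv\<^bsub>W\<^esub> a \<otimes>\<^bsub>W\<^esub> b) = inv\<^bsub>G\<^esub> snd a \<otimes>\<^bsub>G\<^esub> snd b"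
  by (cases a, cases b) (simp add: wreath_inv_mult_eq)

lemma word_dist_position_le:
  assumes "a \<in> carrier W" "b \<in> carrier W"
  shows "dG (snd a) (snd b) \<le> dW a b"
  using word_length_position_le[of "inv\<^bsub>W\<^esub> a \<otimes>\<^bsub>W\<^esub> b"] snd_inv_mult assms
  by (simp add: word_dist_def)

lemma word_dist_changed_lamp_lt:
  assumes "a \<in> carrier W" "b \<in> carrier W" "u \<in> changed_lamps a b"
  shows "dG (snd a) u < dW a b"
proof -
  let ?w = "inv\<^bsub>W\<^esub> a \<otimes>\<^bsub>W\<^esub> b"
  have "inv\<^bsub>G\<^esub> snd a \<otimes>\<^bsub>G\<^esub> u \<in> supp (fst ?w)" using supp_inv_mult_eq assms by blast
  then have "Suc (G.len (inv\<^bsub>G\<^esub> snd a \<otimes>\<^bsub>G\<^esub> u)) \<le> W.len ?w"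
    using lamp_le_reach_radius reach_radius_le_word_length assms by (meson W.inv_closed W.m_closed le_trans)
  then show ?thesis by (simp add: word_dist_def)
qed

lemma card_changed_lamps_le_word_dist:
  assumes "a \<in> carrier W" "b \<in> carrier W"
  shows "card (changed_lamps a b) \<le> dW a b"
  using card_supp_le_word_length[of "inv\<^bsub>W\<^esub> a \<otimes>\<^bsub>W\<^esub> b"] card_supp_inv_mult_eq assms
  by (simp add: word_dist_def)

lemma word_dist_le_changed_lamps:
  assumes ab: "a \<in> carrier W" "b \<in> carrier W"
    and B: "\<And>u. u \<in> changed_lamps a b \<Longrightarrow> dG (snd a) u \<le> B"
  shows "dW a b \<le> real (card (changed_lamps a b)) * (2 * B + 1) + dG (snd a) (snd b)"
proof -
  obtain \<phi> g where w: "inv\<^bsub>W\<^esub> a \<otimes>\<^bsub>W\<^esub> b = (\<phi>, g)" by fastforce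
  have wc: "(\<phi>, g) \<in> carrier W" using w ab by (metis W.inv_closed W.m_closed)
  have \<phi>c: "(\<phi>, \<one>\<^bsub>G\<^esub>) \<in> carrier W" and gc: "g \<in> carrier G"
    using wc by (auto simp: wreath_carrier_iff)
  have g: "g = inv\<^bsub>G\<^esub> snd a \<otimes>\<^bsub>G\<^esub> snd b" using snd_inv_mult[OF ab] w by simp
  have supp: "supp \<phi> = (\<lambda>u. inv\<^bsub>G\<^esub> snd a \<otimes>\<^bsub>G\<^esub> u) ` changed_lamps a b"
    using supp_inv_mult_eq[OF ab] w by simp
  have "\<forall>v\<in>supp \<phi>. real (G.len v) \<le> B"
    using B unfolding supp by (auto simp: word_dist_def)
  note lamps = word_length_lamps_le[OF \<phi>c this] and mv = word_length_move_le[OF gc]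
  have "W.len (\<phi>, g) \<le> W.len (\<phi>, \<one>\<^bsub>G\<^esub>) + W.len (move g)"
    using W.word_length_mult_le[OF lamps(1) mv(1)] mult_move_eq[OF \<phi>c gc] by simp
  moreover have "card (supp \<phi>) = card (changed_lamps a b)"
    using card_supp_inv_mult_eq[OF ab] w by simp
  ultimately show ?thesis
    using lamps(2) mv(2) w g by (simp add: word_dist_def)
qed

end

section \<open>The exponential upper bound\<close>

lemma power_floor_le_two_powr:
  fixes b :: nat and \<rho> x :: real
  assumes "0 \<le> x" "x \<le> \<rho>"
  shows "real b ^ nat \<lfloor>\<rho>\<rfloor> * (2 * \<rho> + 1) + x \<le> 2 powr ((real b + 2) * \<rho> + 4)"
proof -
  define n where "n = nat \<lfloor>\<rho>\<rfloor>"
  define e where "e = b * n + (2 * n + 3)"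
  have n: "real n \<le> \<rho>" "\<rho> < real n + 1" using assms unfolding n_def by linarith+
  have two_pow: "real k \<le> 2 ^ k" for k :: nat
    using less_exp[of k] by (metis less_imp_le of_nat_le_iff of_nat_numeral of_nat_power)
  have "real b ^ n \<le> 2 ^ (b * n)"
    using two_pow[of b] by (metis of_nat_0_le_iff power_mono power_mult)
  moreover have "2 * \<rho> + 1 \<le> 2 ^ (2 * n + 3)"
    using n two_pow[of "2 * n + 3"] by simp
  ultimately have "real b ^ n * (2 * \<rho> + 1) \<le> 2 ^ e"
    using n assms unfolding e_def power_add by (intro mult_mono) auto
  moreover have "x \<le> 2 ^ e"
  proof -
    have "x \<le> real (n + 1)" using assms n by simp
    also have "\<dots> \<le> 2 ^ (n + 1)" by (rule two_pow)
    also have "\<dots> \<le> 2 ^ e" unfolding e_def by (intro power_increasing) auto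
    finally show ?thesis .
  qed
  ultimately have "real b ^ n * (2 * \<rho> + 1) + x \<le> 2 ^ (e + 1)"
    by simp
  also have "\<dots> = 2 powr real (e + 1)"
    by (rule powr_realpow[symmetric]) simp
  also have "\<dots> \<le> 2 powr ((real b + 2) * \<rho> + 4)"
  proof (intro powr_mono)
    have "(real b + 2) * real n \<le> (real b + 2) * \<rho>" using n by (intro mult_left_mono) auto
    then show "real (e + 1) \<le> (real b + 2) * \<rho> + 4" by (simp add: e_def algebra_simps)
  qed simp
  finally show ?thesis unfolding n_def .
qed

context wreath_word
begin

lemma word_dist_le_word_ball:
  assumes ab: "a \<in> carrier W" "b \<in> carrier W" and "\<rho> \<ge> 0"
    and near: "\<And>u. u \<in> changed_lamps a b \<Longrightarrow> dG (snd a) u \<le> \<rho>"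
  shows "dW a b \<le> real (card (G.word_ball \<rho>)) * (2 * \<rho> + 1) + dG (snd a) (snd b)"
proof -
  have pos: "snd a \<in> carrier G" using snd_wreath_carrier ab by blast
  have "card (changed_lamps a b) \<le> card (G.word_ball \<rho>)"
  proof (rule card_inj_on_le)
    show "inj_on (\<lambda>u. inv\<^bsub>G\<^esub> snd a \<otimes>\<^bsub>G\<^esub> u) (changed_lamps a b)"
      using pos by (auto simp: inj_on_def changed_lamps_def)
    show "(\<lambda>u. inv\<^bsub>G\<^esub> snd a \<otimes>\<^bsub>G\<^esub> u) ` changed_lamps a b \<subseteq> G.word_ball \<rho>"
      using near pos by (auto simp: G.word_ball_def word_dist_def changed_lamps_def)
    show "finite (G.word_ball \<rho>)" using G.finite_word_ball generated finite_S by blast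
  qed
  then have "real (card (changed_lamps a b)) * (2 * \<rho> + 1) \<le> real (card (G.word_ball \<rho>)) * (2 * \<rho> + 1)"
    using \<open>\<rho> \<ge> 0\<close> by (intro mult_right_mono) auto
  then show ?thesis using word_dist_le_changed_lamps[OF ab near] by linarith
qed

lemma r_component_preimage:
  assumes w: "w \<in> carrier W" "snd w \<in> V"
    and y: "y \<in> r_component {y \<in> carrier W. snd y \<in> V} dW r w"
  shows "y \<in> carrier W" and "snd y \<in> r_component V dG r (snd w)"
    and "\<And>u. u \<in> changed_lamps w y \<Longrightarrow> \<exists>g\<in>r_component V dG r (snd w). dG g u < r"
proof -
  have "y \<in> carrier W \<and> snd y \<in> r_component V dG r (snd w) \<and>
      (\<forall>u\<in>changed_lamps w y. \<exists>g\<in>r_component V dG r (snd w). dG g u < r)"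
    using y[unfolded r_component_def, simplified]
  proof (induction rule: rtranclp_induct)
    case base
    then show ?case using w by (simp add: r_component_self changed_lamps_def)
  next
    case (step y z)
    have yz: "y \<in> carrier W" "z \<in> carrier W" "snd y \<in> V" "snd z \<in> V" "dW y z < r"
      using step.hyps(2) by (auto simp: r_step_def)
    have "dG (snd y) (snd z) < r" using word_dist_position_le[OF yz(1,2)] yz(5) by linarith
    then have "r_step V dG r (snd y) (snd z)" using yz by (simp add: r_step_def)
    then have z: "snd z \<in> r_component V dG r (snd w)"
      using step.IH by (auto simp: r_component_def intro: rtranclp.rtrancl_into_rtrancl)
    have "\<exists>g\<in>r_component V dG r (snd w). dG g u < r" if u: "u \<in> changed_lamps w z" for u
    proof (cases "u \<in> changed_lamps w y")
      case False
      then have "u \<in> changed_lamps y z" using u by (auto simp: changed_lamps_def)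
      then have "dG (snd y) u < r" using word_dist_changed_lamp_lt[OF yz(1,2)] yz(5) by fastforce
      then show ?thesis using step.IH by blast
    qed (use step.IH in blast)
    then show ?case using yz z by blast
  qed
  then show "y \<in> carrier W" "snd y \<in> r_component V dG r (snd w)"
    "\<And>u. u \<in> changed_lamps w y \<Longrightarrow> \<exists>g\<in>r_component V dG r (snd w). dG g u < r"
    by blast+
qed

lemma diam_r_component_preimage_le:
  assumes w: "w \<in> carrier W" "snd w \<in> V" and "V \<subseteq> carrier G" and "r > 0"
    and diam: "diam_e dG (r_component V dG r (snd w)) \<le> ereal D"
  shows "diam_e dW (r_component {y \<in> carrier W. snd y \<in> V} dW r w)
    \<le> ereal (real (card (G.word_ball (D + r))) * (2 * (D + r) + 1) + D)"
proof (rule diam_e_le)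
  let ?K = "r_component V dG r (snd w)"
  have K: "?K \<subseteq> carrier G" using r_component_subset[OF w(2)] \<open>V \<subseteq> carrier G\<close> by blast
  have dK: "dG g g' \<le> D" if "g \<in> ?K" "g' \<in> ?K" for g g'
    using order_trans[OF diam_e_ge[OF that] diam] by simp
  fix y z assume y: "y \<in> r_component {y \<in> carrier W. snd y \<in> V} dW r w"
    and z: "z \<in> r_component {y \<in> carrier W. snd y \<in> V} dW r w"
  note y' = r_component_preimage[OF w y] and z' = r_component_preimage[OF w z]
  have "dG (snd y) u \<le> D + r" if u: "u \<in> changed_lamps y z" for u
  proof -
    have "u \<in> changed_lamps w y \<or> u \<in> changed_lamps w z" using u by (auto simp: changed_lamps_def)
    then obtain g where g: "g \<in> ?K" "dG g u < r" using y'(3) z'(3) by blast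
    have "u \<in> carrier G" using u by (simp add: changed_lamps_def)
    then have "dG (snd y) u \<le> dG (snd y) g + dG g u"
      using G.word_dist_triangle[OF generated] K g y'(2) by blast
    then show ?thesis using dK[OF y'(2) g(1)] g(2) by linarith
  qed
  moreover have "D \<ge> 0"
    using dK[OF r_component_self r_component_self] w(2) \<open>V \<subseteq> carrier G\<close>
    by (auto simp: word_dist_def G.word_length_one)
  ultimately have "dW y z \<le> real (card (G.word_ball (D + r))) * (2 * (D + r) + 1) + dG (snd y) (snd z)"
    using word_dist_le_word_ball[OF y'(1) z'(1), of "D + r"] \<open>r > 0\<close> by simp
  then show "ereal (dW y z) \<le> ereal (real (card (G.word_ball (D + r))) * (2 * (D + r) + 1) + D)"
    using dK[OF y'(2) z'(2)] by simp
qed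

lemma control_function_wreath:
  assumes D: "control_function (carrier G) dG m (\<lambda>r. ereal (D r))"
  shows "control_function (carrier W) dW m
    (\<lambda>r. ereal (real (card (G.word_ball (D r + r))) * (2 * (D r + r) + 1) + D r))"
  unfolding control_function_def
proof (intro conjI allI impI)
  show "0 \<le> ereal (real (card (G.word_ball (D t + t))) * (2 * (D t + t) + 1) + D t)" if "t \<ge> 0" for t
    using D that unfolding control_function_def by simp
  fix r :: real assume r: "r > 0"
  obtain V where V: "\<forall>i\<le>m. V i \<subseteq> carrier G" "(\<Union>i\<le>m. V i) = carrier G"
    "\<forall>g\<in>carrier G. \<exists>i\<le>m. {g' \<in> carrier G. dG g g' < r} \<subseteq> V i"
    "\<forall>i\<le>m. \<forall>g\<in>V i. diam_e dG (r_component (V i) dG r g) \<le> ereal (D r)"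
    using D[unfolded control_function_def, THEN conjunct2, rule_format, OF r] by (elim exE conjE) blast
  define U where "U i = {y \<in> carrier W. snd y \<in> V i}" for i
  have "(\<Union>i\<le>m. U i) = carrier W"
    using V(2) snd_wreath_carrier by (auto simp: U_def)
  moreover have "\<exists>i\<le>m. {y \<in> carrier W. dW x y < r} \<subseteq> U i" if x: "x \<in> carrier W" for x
  proof -
    obtain i where i: "i \<le> m" "{g' \<in> carrier G. dG (snd x) g' < r} \<subseteq> V i"
      using V(3) snd_wreath_carrier[OF x] by blast
    have "snd y \<in> V i" if "y \<in> carrier W" "dW x y < r" for y
    proof -
      have "dG (snd x) (snd y) < r" using word_dist_position_le[OF x that(1)] that(2) by linarith
      then show ?thesis using i(2) snd_wreath_carrier[OF that(1)] by blast
    qed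
    then show ?thesis using i(1) by (auto simp: U_def)
  qed
  moreover have "diam_e dW (r_component (U i) dW r w)
      \<le> ereal (real (card (G.word_ball (D r + r))) * (2 * (D r + r) + 1) + D r)"
    if "i \<le> m" "w \<in> U i" for i w
    using diam_r_component_preimage_le[of w "V i"] V(1,4) that r by (simp add: U_def)
  ultimately show "\<exists>U. (\<forall>i\<le>m. U i \<subseteq> carrier W) \<and> (\<Union>i\<le>m. U i) = carrier W \<and>
      (\<forall>x\<in>carrier W. \<exists>i\<le>m. {y \<in> carrier W. dW x y < r} \<subseteq> U i) \<and>
      (\<forall>i\<le>m. \<forall>x\<in>U i. diam_e dW (r_component (U i) dW r x)
        \<le> ereal (real (card (G.word_ball (D r + r))) * (2 * (D r + r) + 1) + D r))"
    by (intro exI[of _ U]) (auto simp: U_def)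
qed

lemma linear_control_function_wreath:
  assumes "has_linear_control (carrier G) dG m" "m \<le> k"
  obtains L where "L \<ge> 1" "control_function (carrier W) dW k (\<lambda>r. ereal (2 powr (L * r + 4)))"
proof -
  obtain c where c: "c > 0" "control_function (carrier G) dG m (\<lambda>r. ereal (c * r))"
    using assms(1) by (auto simp: has_linear_control_def)
  define L where "L = (real (card G.letters) + 3) * (c + 1)"
  have "real (card (G.word_ball (c * t + t))) * (2 * (c * t + t) + 1) + c * t \<le> 2 powr (L * t + 4)"
    if "t \<ge> 0" for t
  proof -
    have "real (card (G.word_ball (c * t + t))) \<le> real (card G.letters + 1) ^ nat \<lfloor>c * t + t\<rfloor>"
      using G.card_word_ball_le[OF generated finite_S] by (metis of_nat_le_iff of_nat_power)
    then have "real (card (G.word_ball (c * t + t))) * (2 * (c * t + t) + 1) + c * t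
        \<le> real (card G.letters + 1) ^ nat \<lfloor>c * t + t\<rfloor> * (2 * (c * t + t) + 1) + c * t"
      using c that by (intro add_right_mono mult_right_mono) auto
    also have "\<dots> \<le> 2 powr (L * t + 4)"
      using power_floor_le_two_powr[of "c * t" "c * t + t" "card G.letters + 1"] c that
      by (simp add: L_def algebra_simps)
    finally show ?thesis .
  qed
  then have "control_function (carrier W) dW k (\<lambda>r. ereal (2 powr (L * r + 4)))"
    using control_function_mono[OF control_function_wreath[OF c(2)] assms(2)] by simp
  moreover have "1 * 1 \<le> L" unfolding L_def using c by (intro mult_mono) auto
  ultimately show ?thesis using that by simp
qed

end

section \<open>The exponential lower bound\<close>

definition grid :: "nat \<Rightarrow> nat \<Rightarrow> (nat \<Rightarrow> nat) set" where
  "grid m p = {x. (\<forall>j<m. x j \<le> p) \<and> (\<forall>j\<ge>m. x j = 0)}"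

definition grid_adj :: "nat \<Rightarrow> (nat \<Rightarrow> nat) \<Rightarrow> (nat \<Rightarrow> nat) \<Rightarrow> bool" where
  "grid_adj m a b \<longleftrightarrow> (\<forall>j<m. a j \<le> b j + 1 \<and> b j \<le> a j + 1)"

lemma kuhn_lemma_predicate:
  fixes m p :: nat
  assumes "p > 0"
    and zero_face: "\<And>x i. \<forall>j<m. x j \<le> p \<Longrightarrow> i < m \<Longrightarrow> x i = 0 \<Longrightarrow> P x i"
    and p_face: "\<And>x i. \<forall>j<m. x j \<le> p \<Longrightarrow> i < m \<Longrightarrow> x i = p \<Longrightarrow> \<not> P x i"
  obtains q where "\<forall>i<m. q i < p"
    and "\<forall>i<m. \<exists>r s. (\<forall>j<m. q j \<le> r j \<and> r j \<le> q j + 1) \<and> (\<forall>j<m. q j \<le> s j \<and> s j \<le> q j + 1)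
      \<and> P r i \<noteq> P s i"
proof -
  define label where "label x i = (if P x i then 0 else (1::nat))" for x i
  obtain q where q: "\<forall>i<m. q i < p"
    and cell: "\<forall>i<m. \<exists>r s. (\<forall>j<m. q j \<le> r j \<and> r j \<le> q j + 1) \<and> (\<forall>j<m. q j \<le> s j \<and> s j \<le> q j + 1)
      \<and> label r i \<noteq> label s i"
  proof (rule kuhn_lemma[OF \<open>p > 0\<close>, of m label])
    show "\<forall>x. (\<forall>i<m. x i \<le> p) \<longrightarrow> (\<forall>i<m. label x i = 0 \<or> label x i = 1)"
      by (simp add: label_def)
    show "\<forall>x. (\<forall>i<m. x i \<le> p) \<longrightarrow> (\<forall>i<m. x i = 0 \<longrightarrow> label x i = 0)"
      using zero_face by (simp add: label_def)
    show "\<forall>x. (\<forall>i<m. x i \<le> p) \<longrightarrow> (\<forall>i<m. x i = p \<longrightarrow> label x i = 1)"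
      using p_face by (simp add: label_def)
  qed
  have "label r i = label s i \<longleftrightarrow> P r i = P s i" for r s i by (simp add: label_def)
  then show ?thesis using that q cell by presburger
qed

text \<open>If no \<open>U i\<close> contained a crossing, labelling a
  point by whether it is reachable inside \<open>U i\<close> from the face \<open>x i = 0\<close> would satisfy the
  boundary conditions of Kuhn's lemma, and the fully labelled cell would lie in no \<open>U i\<close>.\<close>

lemma grid_cover_crossing:
  fixes U :: "nat \<Rightarrow> (nat \<Rightarrow> nat) set"
  assumes "p > 0"
    and cells: "\<And>q. q \<in> grid m p \<Longrightarrow> (\<forall>j<m. q j < p) \<Longrightarrow>
        \<exists>i<m. {y \<in> grid m p. \<forall>j<m. q j \<le> y j \<and> y j \<le> q j + 1} \<subseteq> U i"
  shows "\<exists>i<m. \<exists>x y. x i = 0 \<and> y i = p \<and> (\<lambda>a b. a \<in> U i \<and> b \<in> U i \<and> grid_adj m a b)\<^sup>+\<^sup>+ x y"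
proof (rule ccontr)
  assume no_crossing: "\<not> ?thesis"
  define E where "E i a b \<longleftrightarrow> a \<in> U i \<and> b \<in> U i \<and> grid_adj m a b" for i a b
  define reach where "reach i z \<longleftrightarrow> (\<exists>x\<in>grid m p. x i = 0 \<and> (E i)\<^sup>*\<^sup>* x z)" for i z
  define trunc where "trunc x j = (if j < m then x j else 0)" for x :: "nat \<Rightarrow> nat" and j
  have trunc_grid: "\<forall>j<m. x j \<le> p \<Longrightarrow> trunc x \<in> grid m p" for x
    by (simp add: trunc_def grid_def)
  obtain q where q: "\<forall>i<m. q i < p"
    and q_cell: "\<forall>i<m. \<exists>r s. (\<forall>j<m. q j \<le> r j \<and> r j \<le> q j + 1) \<and>
      (\<forall>j<m. q j \<le> s j \<and> s j \<le> q j + 1) \<and> reach i (trunc r) \<noteq> reach i (trunc s)"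
  proof (rule kuhn_lemma_predicate[OF \<open>p > 0\<close>, of m "\<lambda>x i. reach i (trunc x)"])
    show "reach i (trunc x)" if "\<forall>j<m. x j \<le> p" "i < m" "x i = 0" for x i
      unfolding reach_def using trunc_grid that by (intro bexI[of _ "trunc x"]) (auto simp: trunc_def)
    show "\<not> reach i (trunc x)" if x: "\<forall>j<m. x j \<le> p" "i < m" "x i = p" for x i
    proof
      assume "reach i (trunc x)"
      then obtain y where y: "y i = 0" "(E i)\<^sup>*\<^sup>* y (trunc x)" by (auto simp: reach_def)
      moreover have "trunc x i = p" using x by (simp add: trunc_def)
      ultimately have "(E i)\<^sup>+\<^sup>+ y (trunc x)" using \<open>p > 0\<close> by (metis rtranclpD less_irrefl)
      then show False using no_crossing x(2) y(1) \<open>trunc x i = p\<close> unfolding E_def by blast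
    qed
  qed
  have "trunc q \<in> grid m p" using q trunc_grid by (simp add: less_imp_le)
  moreover have "\<forall>j<m. trunc q j < p" using q by (simp add: trunc_def)
  ultimately obtain c where c: "c < m"
    and cell: "{y \<in> grid m p. \<forall>j<m. trunc q j \<le> y j \<and> y j \<le> trunc q j + 1} \<subseteq> U c"
    using cells by blast
  obtain r s where rs: "\<forall>j<m. q j \<le> r j \<and> r j \<le> q j + 1" "\<forall>j<m. q j \<le> s j \<and> s j \<le> q j + 1"
    and "reach c (trunc r) \<noteq> reach c (trunc s)"
    using q_cell c by blast
  moreover have "r j \<le> p" "s j \<le> p" "r j \<le> s j + 1" "s j \<le> r j + 1" if "j < m" for j
    using rs[rule_format, OF that] q[rule_format, OF that] by linarith+
  then have "trunc r \<in> grid m p" "trunc s \<in> grid m p"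
    "grid_adj m (trunc r) (trunc s)" "grid_adj m (trunc s) (trunc r)"
    by (auto intro!: trunc_grid simp: grid_adj_def trunc_def)
  then have "E c (trunc r) (trunc s)" "E c (trunc s) (trunc r)"
    using cell rs by (auto simp: E_def trunc_def)
  then have "reach c (trunc r) \<longleftrightarrow> reach c (trunc s)"
    unfolding reach_def by (meson rtranclp.rtrancl_into_rtrancl)
  ultimately show False by blast
qed

context wreath_word
begin

definition cube_config :: "(nat \<times> nat \<Rightarrow> 'g) \<Rightarrow> 'h \<Rightarrow> nat \<Rightarrow> (nat \<Rightarrow> nat) \<Rightarrow> ('g \<Rightarrow> 'h) \<times> 'g" where
  "cube_config pos h m x =
     ((\<lambda>u\<in>carrier G. if \<exists>j<m. \<exists>l<x j. u = pos (j, l) then h else \<one>\<^bsub>H\<^esub>), \<one>\<^bsub>G\<^esub>)"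

lemma supp_cube_config_subset:
  "x \<in> grid m p \<Longrightarrow> supp (fst (cube_config pos h m x)) \<subseteq> pos ` ({..<m} \<times> {..<p})"
  by (force simp: supp_def cube_config_def grid_def split: if_splits)

lemma cube_config_carrier:
  assumes "h \<in> carrier H" "x \<in> grid m p"
  shows "cube_config pos h m x \<in> carrier W"
proof -
  have "finite (supp (fst (cube_config pos h m x)))"
    using supp_cube_config_subset[OF assms(2)] by (rule finite_subset) auto
  then show ?thesis using assms(1) by (auto simp: cube_config_def wreath_carrier_iff)
qed

lemma finite_changed_lamps_cube_config:
  "x \<in> grid m p \<Longrightarrow> y \<in> grid m p \<Longrightarrow>
    finite (changed_lamps (cube_config pos h m x) (cube_config pos h m y))"
  using changed_lamps_subset_supp supp_cube_config_subset
  by (metis (no_types, lifting) finite_SigmaI finite_imageI finite_lessThan finite_subset finite_Un)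

lemma card_changed_lamps_cube_config_adjacent:
  assumes "grid_adj m x y"
  shows "card (changed_lamps (cube_config pos h m x) (cube_config pos h m y)) \<le> m"
proof -
  have "changed_lamps (cube_config pos h m x) (cube_config pos h m y)
      \<subseteq> (\<lambda>j. pos (j, min (x j) (y j))) ` {..<m}"
  proof
    fix u assume "u \<in> changed_lamps (cube_config pos h m x) (cube_config pos h m y)"
    then have "(\<exists>j<m. \<exists>l<x j. u = pos (j, l)) \<noteq> (\<exists>j<m. \<exists>l<y j. u = pos (j, l))"
      by (auto simp: changed_lamps_def cube_config_def split: if_splits)
    then obtain j l where j: "j < m" "u = pos (j, l)"
      and l: "l < x j \<and> \<not> l < y j \<or> l < y j \<and> \<not> l < x j"
      by blast
    moreover have "x j \<le> y j + 1" "y j \<le> x j + 1" using assms \<open>j < m\<close> by (auto simp: grid_adj_def)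
    ultimately have "l = min (x j) (y j)" by (simp add: min_def) presburger
    then show "u \<in> (\<lambda>j. pos (j, min (x j) (y j))) ` {..<m}" using j by blast
  qed
  then show ?thesis using card_mono card_image_le
    by (metis (no_types, lifting) card_lessThan finite_imageI finite_lessThan order_trans)
qed

lemma word_dist_cube_config_adjacent_le:
  assumes "h \<in> carrier H" "pos ` ({..<m} \<times> {..<p}) \<subseteq> G.word_ball R" "R \<ge> 0"
    and xy: "x \<in> grid m p" "y \<in> grid m p" "grid_adj m x y"
  shows "dW (cube_config pos h m x) (cube_config pos h m y) \<le> real m * (2 * R + 1)"
proof -
  let ?a = "cube_config pos h m x" and ?b = "cube_config pos h m y"
  have "dG (snd ?a) u \<le> R" if "u \<in> changed_lamps ?a ?b" for u
    using that changed_lamps_subset_supp supp_cube_config_subset[OF xy(1)]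
      supp_cube_config_subset[OF xy(2)] assms(2)
    by (fastforce simp: cube_config_def word_dist_def G.word_ball_def)
  then have "dW ?a ?b \<le> real (card (changed_lamps ?a ?b)) * (2 * R + 1) + dG (snd ?a) (snd ?b)"
    using word_dist_le_changed_lamps cube_config_carrier assms(1) xy by blast
  also have "dG (snd ?a) (snd ?b) = 0" by (simp add: cube_config_def word_dist_def G.word_length_one)
  also have "real (card (changed_lamps ?a ?b)) * (2 * R + 1) \<le> real m * (2 * R + 1)"
    using card_changed_lamps_cube_config_adjacent[OF xy(3)] \<open>R \<ge> 0\<close> by (intro mult_right_mono) auto
  finally show ?thesis by simp
qed

lemma card_changed_lamps_cube_config_crossing:
  assumes "h \<noteq> \<one>\<^bsub>H\<^esub>" "inj_on pos ({..<m} \<times> {..<p})" "pos ` ({..<m} \<times> {..<p}) \<subseteq> carrier G"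
    and xy: "x \<in> grid m p" "y \<in> grid m p" "i < m" "x i = 0" "y i = p"
  shows "p \<le> card (changed_lamps (cube_config pos h m x) (cube_config pos h m y))"
proof -
  have "pos ` ({i} \<times> {..<p}) \<subseteq> changed_lamps (cube_config pos h m x) (cube_config pos h m y)"
  proof
    fix u assume "u \<in> pos ` ({i} \<times> {..<p})"
    then obtain l where l: "l < p" "u = pos (i, l)" by blast
    have "\<not> (\<exists>j<m. \<exists>l'<x j. u = pos (j, l'))"
    proof
      assume "\<exists>j<m. \<exists>l'<x j. u = pos (j, l')"
      then obtain j l' where "j < m" "l' < x j" "u = pos (j, l')" by blast
      moreover have "x j \<le> p" using xy(1) \<open>j < m\<close> by (simp add: grid_def)
      ultimately have "(j, l') = (i, l)" using assms(2) l xy(3) unfolding inj_on_def by fastforce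
      then show False using \<open>l' < x j\<close> xy(4) by simp
    qed
    moreover have "\<exists>j<m. \<exists>l'<y j. u = pos (j, l')" using xy(3,5) l by blast
    moreover have "u \<in> carrier G" using assms(3) xy(3) l by blast
    ultimately show "u \<in> changed_lamps (cube_config pos h m x) (cube_config pos h m y)"
      using assms(1) by (simp add: changed_lamps_def cube_config_def)
  qed
  moreover have "inj_on pos ({i} \<times> {..<p})"
    by (rule inj_on_subset[OF assms(2)]) (use xy(3) in auto)
  then have "card (pos ` ({i} \<times> {..<p})) = p"
    by (simp add: card_image card_cartesian_product)
  ultimately show ?thesis
    using card_mono finite_changed_lamps_cube_config[OF xy(1,2)] by metis
qed

text \<open>Adjacent cube configurations are closer than \<open>r\<close>, so the cover at scale \<open>r\<close> pulls back to
  a cover of the grid as in \<open>grid_cover_crossing\<close>; a crossing chain stays in one \<open>r\<close>-component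
  and joins two configurations that differ in a whole row of \<open>p\<close> lamps.\<close>

lemma cube_side_le_control_function:
  assumes cf: "control_function (carrier W) dW k D"
    and h: "h \<in> carrier H" "h \<noteq> \<one>\<^bsub>H\<^esub>"
    and pos: "inj_on pos ({..<Suc k} \<times> {..<p})" "pos ` ({..<Suc k} \<times> {..<p}) \<subseteq> G.word_ball R"
    and "R \<ge> 0" and r: "real (Suc k) * (2 * R + 1) < r" and "p > 0"
  shows "ereal (real p) \<le> D r"
proof -
  let ?c = "cube_config pos h (Suc k)" and ?grid = "grid (Suc k) p"
  have c: "?c x \<in> carrier W" if "x \<in> ?grid" for x using cube_config_carrier h(1) that by blast
  have close: "dW (?c x) (?c y) < r" if "x \<in> ?grid" "y \<in> ?grid" "grid_adj (Suc k) x y" for x y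
    using word_dist_cube_config_adjacent_le[OF h(1) pos(2) \<open>R \<ge> 0\<close> that] r by linarith
  obtain U where U: "\<forall>x\<in>carrier W. \<exists>i\<le>k. {y \<in> carrier W. dW x y < r} \<subseteq> U i"
    "\<forall>i\<le>k. \<forall>x\<in>U i. diam_e dW (r_component (U i) dW r x) \<le> D r"
    using cf[unfolded control_function_def, THEN conjunct2, rule_format, of r] r \<open>R \<ge> 0\<close>
    by (smt (verit) of_nat_0_le_iff mult_nonneg_nonneg)
  define U' where "U' i = {x \<in> ?grid. ?c x \<in> U i}" for i
  have "\<exists>i<Suc k. \<exists>x y. x i = 0 \<and> y i = p \<and> (\<lambda>a b. a \<in> U' i \<and> b \<in> U' i \<and> grid_adj (Suc k) a b)\<^sup>+\<^sup>+ x y"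
  proof (rule grid_cover_crossing[OF \<open>p > 0\<close>])
    fix q assume q: "q \<in> ?grid"
    obtain i where i: "i \<le> k" "{y \<in> carrier W. dW (?c q) y < r} \<subseteq> U i" using U(1) c[OF q] by blast
    have "y \<in> U' i" if "y \<in> ?grid" "\<forall>j<Suc k. q j \<le> y j \<and> y j \<le> q j + 1" for y
      using i(2) close[OF q that(1)] c[OF that(1)] that by (force simp: U'_def grid_adj_def)
    then show "\<exists>i<Suc k. {y \<in> ?grid. \<forall>j<Suc k. q j \<le> y j \<and> y j \<le> q j + 1} \<subseteq> U' i"
      using i(1) by (intro exI[of _ i]) auto
  qed
  then obtain i x y where ixy: "i < Suc k" "x i = 0" "y i = p"
    and chain: "(\<lambda>a b. a \<in> U' i \<and> b \<in> U' i \<and> grid_adj (Suc k) a b)\<^sup>+\<^sup>+ x y"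
    by blast
  have x: "x \<in> ?grid" "?c x \<in> U i" and y: "y \<in> ?grid"
    using tranclpD[OF chain] tranclp.cases[OF chain] by (auto simp: U'_def)
  have "?c y \<in> r_component (U i) dW r (?c x)"
    using tranclp_into_rtranclp[OF chain]
    by (rule r_component_of_rtranclp) (auto simp: r_step_def U'_def intro: close)
  then have "ereal (dW (?c x) (?c y)) \<le> diam_e dW (r_component (U i) dW r (?c x))"
    by (rule diam_e_ge[OF r_component_self])
  also have "\<dots> \<le> D r" using U(2) ixy(1) x(2) by simp
  finally have "ereal (dW (?c x) (?c y)) \<le> D r" .
  moreover have "pos ` ({..<Suc k} \<times> {..<p}) \<subseteq> carrier G"
    using pos(2) by (auto simp: G.word_ball_def)
  then have "real p \<le> dW (?c x) (?c y)"
    using card_changed_lamps_cube_config_crossing[OF h(2) pos(1) _ x(1) y ixy]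
      card_changed_lamps_le_word_dist[OF c[OF x(1)] c[OF y]] by linarith
  ultimately show ?thesis by (meson ereal_less_eq(3) order_trans)
qed

lemma growth_le_control_function:
  assumes cf: "control_function (carrier W) dW k D"
    and h: "h \<in> carrier H" "h \<noteq> \<one>\<^bsub>H\<^esub>"
    and "R \<ge> 0" and r: "real (Suc k) * (2 * R + 1) < r"
  shows "growth G S R \<le> ereal (real (Suc k)) * (D r + 1)"
proof -
  define B where "B = {g \<in> carrier G. real (G.len g) < R}"
  define p where "p = card B div Suc k"
  have "B \<subseteq> G.word_ball R" by (auto simp: B_def G.word_ball_def)
  then have B: "finite B" "B \<subseteq> G.word_ball R"
    using finite_subset G.finite_word_ball[OF generated finite_S] by auto
  have "0 \<le> D r" using cf r \<open>R \<ge> 0\<close> unfolding control_function_def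
    by (smt (verit) of_nat_0_le_iff mult_nonneg_nonneg)
  have "ereal (real p) \<le> D r"
  proof (cases "p = 0")
    case False
    have "card ({..<Suc k} \<times> {..<p}) \<le> card B"
      unfolding card_cartesian_product card_lessThan p_def by (rule times_div_less_eq_dividend)
    from card_le_inj[OF _ B(1) this] obtain pos
      where "pos ` ({..<Suc k} \<times> {..<p}) \<subseteq> B" "inj_on pos ({..<Suc k} \<times> {..<p})"
      by auto
    then show ?thesis
      using cube_side_le_control_function[OF cf h] B(2) \<open>R \<ge> 0\<close> r False by blast
  qed (use \<open>0 \<le> D r\<close> in \<open>simp add: zero_ereal_def\<close>)
  have "card B = Suc k * p + card B mod Suc k" unfolding p_def by (rule mult_div_mod_eq[symmetric])
  moreover have "card B mod Suc k < Suc k" by simp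
  ultimately have "card B \<le> Suc k * (p + 1)" by (simp only: distrib_left mult_1_right)
  then have "real (card B) \<le> real (Suc k) * (real p + 1)"
    by (metis of_nat_1 of_nat_add of_nat_mono of_nat_mult)
  then have "ereal (real (card B)) \<le> ereal (real (Suc k)) * (ereal (real p) + 1)" by simp
  also have "\<dots> \<le> ereal (real (Suc k)) * (D r + 1)"
    using \<open>ereal (real p) \<le> D r\<close> by (intro ereal_mult_left_mono add_right_mono) auto
  finally show ?thesis unfolding growth_def B_def .
qed

lemma control_function_dominates_exp:
  assumes growth: "weakly_dominates (growth G S) (\<lambda>t. ereal (2 powr t))"
    and cf: "control_function (carrier W) dW k D"
    and h: "h \<in> carrier H" "h \<noteq> \<one>\<^bsub>H\<^esub>"
  shows "weakly_dominates D (\<lambda>t. ereal (2 powr t))"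
proof -
  obtain a C where a: "a \<ge> 1" "C \<ge> 0"
    and exp_le: "\<And>t. t \<ge> 0 \<Longrightarrow> ereal (2 powr t) \<le> ereal a * growth G S (a * t + C) + ereal C"
    using growth unfolding weakly_dominates_def by blast
  define m where "m = real (Suc k)"
  define \<Lambda> where "\<Lambda> = 2 * m * a"
  define K where "K = m * (2 * C + 1) + 1 + (m * a + C)"
  have "0 \<le> m * a" using a by (simp add: m_def)
  moreover have "1 * 1 \<le> m * a" using a by (intro mult_mono) (auto simp: m_def)
  ultimately have \<Lambda>K: "\<Lambda> \<ge> 1" "K \<ge> 0" "m * a \<le> \<Lambda>" "m * a + C \<le> K"
    using a by (auto simp: \<Lambda>_def K_def m_def algebra_simps)
  have "ereal (2 powr t) \<le> ereal \<Lambda> * D (\<Lambda> * t + K) + ereal K" if t: "t \<ge> 0" for t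
  proof -
    define N where "N = real (card {g \<in> carrier G. real (G.len g) < a * t + C})"
    have "m * (2 * (a * t + C) + 1) + (1 + m * a + C) = \<Lambda> * t + K"
      by (simp add: \<Lambda>_def K_def algebra_simps)
    then have "m * (2 * (a * t + C) + 1) < \<Lambda> * t + K"
      using \<open>0 \<le> m * a\<close> a by linarith
    then have g: "ereal N \<le> ereal m * (D (\<Lambda> * t + K) + 1)"
      using growth_le_control_function[OF cf h, of "a * t + C"] a t
      by (simp add: m_def N_def growth_def)
    have e: "2 powr t \<le> a * N + C" using exp_le[OF t] by (simp add: N_def growth_def)
    have D0: "0 \<le> D (\<Lambda> * t + K)"
      using cf t \<Lambda>K unfolding control_function_def by simp
    show ?thesis
    proof (cases "D (\<Lambda> * t + K)")
      case (real d)
      then have "N \<le> m * (d + 1)" "d \<ge> 0" using g D0 by auto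
      then have "a * N \<le> a * (m * (d + 1))" using a by (intro mult_left_mono) auto
      then have "a * N + C \<le> (m * a) * d + (m * a + C)" by (simp add: algebra_simps)
      also have "\<dots> \<le> \<Lambda> * d + K"
        using \<Lambda>K \<open>d \<ge> 0\<close> by (intro add_mono mult_right_mono) auto
      finally show ?thesis using e real by simp
    qed (use D0 \<Lambda>K in auto)
  qed
  then show ?thesis using \<Lambda>K unfolding weakly_dominates_def by blast
qed

end

theorem corollary4p6:
  fixes G :: "'g monoid" and H :: "'h monoid" and S :: "'g set" and n :: nat
  assumes "group G" and "finite S" and "S \<subseteq> carrier G" and "generate G S = carrier G"
    and "exp_growth G S"
    and "group H" and "finite (carrier H)" and "carrier H \<noteq> {\<one>\<^bsub>H\<^esub>}"
    and "dim_AN (carrier G) (word_dist G S) \<le> enat n"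
  shows "\<forall>k\<ge>n.
     (\<exists>D. control_function (carrier (wreath H G)) (word_dist (wreath H G) (wreath_gens H G S)) k D
          \<and> weakly_dominates (\<lambda>t. ereal (2 powr t)) D)
   \<and> (\<forall>D. control_function (carrier (wreath H G)) (word_dist (wreath H G) (wreath_gens H G S)) k D
          \<longrightarrow> weakly_dominates D (\<lambda>t. ereal (2 powr t)))"
proof -
  interpret wreath_word G H S
    using assms by (simp add: wreath_word_def wreath_groups_def wreath_word_axioms_def)
  obtain m where "m \<le> n" and linear: "has_linear_control (carrier G) dG m"
    using dim_AN_le_imp_linear_control assms(9) by blast
  obtain h where h: "h \<in> carrier H" "h \<noteq> \<one>\<^bsub>H\<^esub>"
    using assms(8) H.one_closed by blast
  have growth: "weakly_dominates (growth G S) (\<lambda>t. ereal (2 powr t))"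
    using assms(5) by (simp add: exp_growth_def weakly_equivalent_def)
  show ?thesis
  proof (intro allI impI conjI)
    fix k assume "n \<le> k"
    then obtain L where "L \<ge> 1" "control_function (carrier W) dW k (\<lambda>r. ereal (2 powr (L * r + 4)))"
      using linear_control_function_wreath[OF linear] \<open>m \<le> n\<close> le_trans by blast
    then show "\<exists>D. control_function (carrier W) dW k D \<and> weakly_dominates (\<lambda>t. ereal (2 powr t)) D"
      using weakly_dominates_exp_affine by auto
    show "weakly_dominates D (\<lambda>t. ereal (2 powr t))" if "control_function (carrier W) dW k D" for D
      using control_function_dominates_exp[OF growth that h] .
  qed
qed

end
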